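(* Let $\mathcal D\subset\mathbb R^d$ be compact and convex, $\Pi_{\mathcal D}(y)=\operatorname{argmin}_{x\in\mathcal D}|x-y|$, and let $\mathcal F:\mathbb R^d\to\mathbb R$ satisfy: (A1) $\inf\mathcal F>-\infty$; (A2) there exist $L_{\mathcal F},c_u,c_l,R_l>0$ with $|\mathcal F(x)-\mathcal F(y)|\le L_{\mathcal F}(1+|x|+|y|)|x-y|$ for all $x,y$, $\mathcal F(x)-\mathcal F(x^* )\le c_u(1+|x|^2)$ for all $x$, and $\mathcal F(x)-\mathcal F(x^* )\ge c_l|x|^2$ for all $|x|>R_l$, where $x^*$ is a global minimizer of $\mathcal F$. Let $\Delta t\in(0,1]$, $\lambda,\sigma,\nu,\alpha>0$, $\sigma_0\ge0$, $T>0$, $N\in\mathbb N$. Particle system: $(X_0^i,V_0^i)$, $i=1,\dots,N$, are i.i.d. with law $f_0\in\mathcal P_1(\mathcal D\times\mathbb R^d)$; for $k=0,1,\dots$, let $T_k^i\sim\mathrm{Bern}(e^{-\nu\Delta t})$ and $\xi_k^i\sim\mathcal N(0,I_d)$ be independent of each other, across $i,k$, and of the initial data; with $\rho_k^N=\frac1N\sum_i\delta_{X_k^i}$ set $(W_k^i)_\ell=\lambda(X^\alpha[\rho_k^N]-X_k^i)_\ell+\sigma(\sigma_0+|(X^\alpha[\rho_k^N]-X_k^i)_\ell|)\xi^i_{k,\ell}$ for $\ell=1,\dots,d$, and $V_{k+1}^i=T_k^iV_k^i+(1-T_k^i)W_k^i$, $X_{k+1}^i=\Pi_{\mathcal D}(X_k^i+\Delta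 t V_{k+1}^i)$. Nonlinear copies: $(\overline X_0^i,\overline V_0^i)=(X_0^i,V_0^i)$ and, with the same $T_k^i,\xi_k^i$ and $\rho_k=\mathrm{Law}(\overline X_k^i)$, $(\overline W_k^i)_\ell=\lambda(X^\alpha[\rho_k]-\overline X_k^i)_\ell+\sigma(\sigma_0+|(X^\alpha[\rho_k]-\overline X_k^i)_\ell|)\xi^i_{k,\ell}$, $\overline V_{k+1}^i=T_k^i\overline V_k^i+(1-T_k^i)\overline W_k^i$, $\overline X_{k+1}^i=\Pi_{\mathcal D}(\overline X_k^i+\Delta t\overline V_{k+1}^i)$. Then there exists a constant $C=C(\alpha,\mathcal D,\lambda,\sigma,\mathcal F,d)$, independent of $N$ and $T$, such that $$\sup_{k\Delta t\in[0,T]}\mathbb E\Big[\frac1N\sum_{i=1}^N|X_k^i-\overline X_k^i|+|V_k^i-\overline V_k^i|\Big]\le Ce^{CT}\frac1{\sqrt N}.$$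
   Context: For $\rho\in\mathcal P(\mathbb R^d)$, $X^\alpha[\rho]=\int x\,\omega_\alpha(x)\rho(dx)/\int\omega_\alpha(x)\rho(dx)$ with $\omega_\alpha(x)=\exp(-\alpha\mathcal F(x))$. $\mathcal P_1$ denotes probability measures with finite first moment; $|\cdot|$ is the Euclidean norm; $v_\ell$ denotes the $\ell$-th component. *)

theory Defs
  imports "HOL-Probability.Probability"
begin

definition cbo_weight :: "real \<Rightarrow> (real^'d \<Rightarrow> real) \<Rightarrow> real^'d \<Rightarrow> real" where
  "cbo_weight \<alpha> F x = exp (- \<alpha> * F x)"

definition Xalpha :: "real \<Rightarrow> (real^'d \<Rightarrow> real) \<Rightarrow> (real^'d) measure \<Rightarrow> real^'d" where
  "Xalpha \<alpha> F \<rho> =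
     (1 / (\<integral>x. cbo_weight \<alpha> F x \<partial>\<rho>)) *\<^sub>R (\<integral>x. cbo_weight \<alpha> F x *\<^sub>R x \<partial>\<rho>)"

text \<open>Empirical measure (1/N) sum_{i<N} delta_{x i}: the law of x I with I uniform on {0..<N}.\<close>

definition empirical_measure :: "nat \<Rightarrow> (nat \<Rightarrow> real^'d) \<Rightarrow> (real^'d) measure" where
  "empirical_measure N x = measure_pmf (map_pmf x (pmf_of_set {..<N}))"

text \<open>The vector W (componentwise drift plus anisotropic noise) and one update step.
  Coin value True corresponds to T = 1 (keep the old velocity).\<close>

definition cbo_W :: "real \<Rightarrow> real \<Rightarrow> real \<Rightarrow> real^'d \<Rightarrow> real^'d \<Rightarrow> real^'d \<Rightarrow> real^'d" where
  "cbo_W lam \<sigma> \<sigma>0 m x z =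
     (\<chi> l. lam * (m - x) $ l + \<sigma> * (\<sigma>0 + \<bar>(m - x) $ l\<bar>) * z $ l)"

definition cbo_update ::
  "(real^'d) set \<Rightarrow> real \<Rightarrow> real \<Rightarrow> real \<Rightarrow> real \<Rightarrow> real^'d \<Rightarrow> bool \<Rightarrow> real^'d
    \<Rightarrow> (real^'d) \<times> (real^'d) \<Rightarrow> (real^'d) \<times> (real^'d)" where
  "cbo_update D dt lam \<sigma> \<sigma>0 m t z xv =
     (let v' = (if t then snd xv else cbo_W lam \<sigma> \<sigma>0 m (fst xv) z)
      in (closest_point D (fst xv + dt *\<^sub>R v'), v'))"

primrec particles ::
  "real \<Rightarrow> (real^'d \<Rightarrow> real) \<Rightarrow> (real^'d) set \<Rightarrow> real \<Rightarrow> real \<Rightarrow> real \<Rightarrow> real \<Rightarrow>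
   (nat \<Rightarrow> 'a \<Rightarrow> real^'d) \<Rightarrow> (nat \<Rightarrow> 'a \<Rightarrow> real^'d) \<Rightarrow>
   (nat \<Rightarrow> nat \<Rightarrow> 'a \<Rightarrow> bool) \<Rightarrow> (nat \<Rightarrow> nat \<Rightarrow> 'a \<Rightarrow> real^'d) \<Rightarrow> nat \<Rightarrow>
   nat \<Rightarrow> 'a \<Rightarrow> nat \<Rightarrow> (real^'d) \<times> (real^'d)" where
  "particles \<alpha> F D dt lam \<sigma> \<sigma>0 X0 V0 Tb \<xi> N 0 = (\<lambda>\<omega> i. (X0 i \<omega>, V0 i \<omega>))"
| "particles \<alpha> F D dt lam \<sigma> \<sigma>0 X0 V0 Tb \<xi> N (Suc k) =
     (\<lambda>\<omega> i. cbo_update D dt lam \<sigma> \<sigma>0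
        (Xalpha \<alpha> F (empirical_measure N
            (\<lambda>j. fst (particles \<alpha> F D dt lam \<sigma> \<sigma>0 X0 V0 Tb \<xi> N k \<omega> j))))
        (Tb k i \<omega>) (\<xi> k i \<omega>) (particles \<alpha> F D dt lam \<sigma> \<sigma>0 X0 V0 Tb \<xi> N k \<omega> i))"

primrec mf_copies ::
  "'a measure \<Rightarrow> real \<Rightarrow> (real^'d \<Rightarrow> real) \<Rightarrow> (real^'d) set \<Rightarrow> real \<Rightarrow> real \<Rightarrow> real \<Rightarrow> real \<Rightarrow>
   (nat \<Rightarrow> 'a \<Rightarrow> real^'d) \<Rightarrow> (nat \<Rightarrow> 'a \<Rightarrow> real^'d) \<Rightarrow>
   (nat \<Rightarrow> nat \<Rightarrow> 'a \<Rightarrow> bool) \<Rightarrow> (nat \<Rightarrow> nat \<Rightarrow> 'a \<Rightarrow> real^'d) \<Rightarrow>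
   nat \<Rightarrow> 'a \<Rightarrow> nat \<Rightarrow> (real^'d) \<times> (real^'d)" where
  "mf_copies M \<alpha> F D dt lam \<sigma> \<sigma>0 X0 V0 Tb \<xi> 0 = (\<lambda>\<omega> i. (X0 i \<omega>, V0 i \<omega>))"
| "mf_copies M \<alpha> F D dt lam \<sigma> \<sigma>0 X0 V0 Tb \<xi> (Suc k) =
     (\<lambda>\<omega> i. cbo_update D dt lam \<sigma> \<sigma>0
        (Xalpha \<alpha> F (distr M borel
            (\<lambda>\<omega>'. fst (mf_copies M \<alpha> F D dt lam \<sigma> \<sigma>0 X0 V0 Tb \<xi> k \<omega>' i))))
        (Tb k i \<omega>) (\<xi> k i \<omega>) (mf_copies M \<alpha> F D dt lam \<sigma> \<sigma>0 X0 V0 Tb \<xi> k \<omega> i))"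

text \<open>Index set of all primitive random inputs: initial data of particle i,
  coin T_k^i, and component l of the Gaussian xi_k^i.\<close>

datatype 'd cbo_idx = Init nat | Coin nat nat | Noise nat nat 'd

definition cbo_sigmas ::
  "'a measure \<Rightarrow> (nat \<Rightarrow> 'a \<Rightarrow> real^'d) \<Rightarrow> (nat \<Rightarrow> 'a \<Rightarrow> real^'d) \<Rightarrow>
   (nat \<Rightarrow> nat \<Rightarrow> 'a \<Rightarrow> bool) \<Rightarrow> (nat \<Rightarrow> nat \<Rightarrow> 'a \<Rightarrow> real^'d) \<Rightarrow> 'd cbo_idx \<Rightarrow> 'a set set" where
  "cbo_sigmas M X0 V0 Tb \<xi> j = (case j of
      Init i \<Rightarrow> sets (vimage_algebra (space M) (\<lambda>\<omega>. (X0 i \<omega>, V0 i \<omega>)) borel)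
    | Coin k i \<Rightarrow> sets (vimage_algebra (space M) (Tb k i) (count_space UNIV))
    | Noise k i l \<Rightarrow> sets (vimage_algebra (space M) (\<lambda>\<omega>. \<xi> k i \<omega> $ l) borel))"

definition cbo_setting ::
  "'a measure \<Rightarrow> (real^'d) set \<Rightarrow> real \<Rightarrow> real \<Rightarrow> (((real^'d) \<times> (real^'d)) measure) \<Rightarrow>
   (nat \<Rightarrow> 'a \<Rightarrow> real^'d) \<Rightarrow> (nat \<Rightarrow> 'a \<Rightarrow> real^'d) \<Rightarrow>
   (nat \<Rightarrow> nat \<Rightarrow> 'a \<Rightarrow> bool) \<Rightarrow> (nat \<Rightarrow> nat \<Rightarrow> 'a \<Rightarrow> real^'d) \<Rightarrow> bool" where
  "cbo_setting M D dt \<nu> f0 X0 V0 Tb \<xi> \<longleftrightarrow>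
     prob_space M \<and>
     prob_space f0 \<and> sets f0 = sets borel \<and> emeasure f0 (D \<times> UNIV) = 1 \<and>
     integrable f0 (\<lambda>(x, v). norm x + norm v) \<and>
     (\<forall>i. (\<lambda>\<omega>. (X0 i \<omega>, V0 i \<omega>)) \<in> M \<rightarrow>\<^sub>M borel \<and>
          distr M borel (\<lambda>\<omega>. (X0 i \<omega>, V0 i \<omega>)) = f0) \<and>
     (\<forall>k i. Tb k i \<in> M \<rightarrow>\<^sub>M count_space UNIV \<and>
          distr M (count_space UNIV) (Tb k i) = measure_pmf (bernoulli_pmf (exp (- \<nu> * dt)))) \<and>
     (\<forall>k i l. distributed M lborel (\<lambda>\<omega>. \<xi> k i \<omega> $ l) std_normal_density) \<and>
     prob_space.indep_sets M (cbo_sigmas M X0 V0 Tb \<xi>) UNIV"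

end

theory Submission
  imports Defs
begin

text \<open>
  Couple the particle system with the mean-field copies synchronously: both are driven by the
  same initial data, coins and Gaussian noises. The projection onto D is 1-Lipschitz, and W is
  Lipschitz in the consensus point and the position with the random factor
  d lam + \<sigma> (|\<xi>_1| + ... + |\<xi>_d|), which is independent of the current state and
  has mean at most d (lam + \<sigma>). The distance between the two consensus points splits into two parts. The
  weighted means of the two systems differ by at most a constant times the mean position
  error, because on the compact set D the weights are Lipschitz and bounded above and below.
  The weighted mean of the copies differs from X^\<alpha>[\<rho>_k] by a normalised sum of
  independent, centred, bounded terms, since the copies are i.i.d.; its expectation is
  O(1/\<surd>N). The averaged expected errors thus satisfy a linear recursion, and a discrete
  Gronwall argument gives the bound (1 + K) exp(K k \<Delta>t) / \<surd>N.
\<close>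

definition weighted_mean :: "('b \<Rightarrow> real) \<Rightarrow> nat \<Rightarrow> (nat \<Rightarrow> 'b) \<Rightarrow> 'b::real_normed_vector" where
  "weighted_mean w N x = (1 / (\<Sum>j<N. w (x j))) *\<^sub>R (\<Sum>j<N. w (x j) *\<^sub>R x j)"

lemma integral_empirical_measure:
  fixes g :: "real^'d \<Rightarrow> 'b::{banach, second_countable_topology}"
  assumes "N \<ge> 1"
  shows "(\<integral>y. g y \<partial>empirical_measure N x) = (1 / real N) *\<^sub>R (\<Sum>j<N. g (x j))"
proof -
  have ne: "{..<N} \<noteq> {}" using assms by (auto simp: lessThan_empty_iff)
  have "(\<integral>y. g y \<partial>empirical_measure N x) = (\<integral>j. g (x j) \<partial>measure_pmf (pmf_of_set {..<N}))"
    unfolding empirical_measure_def by (rule integral_map_pmf)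
  also have "\<dots> = (\<Sum>j<N. pmf (pmf_of_set {..<N}) j *\<^sub>R g (x j))"
    by (rule integral_measure_pmf[of "{..<N}"]) (use ne in auto)
  also have "\<dots> = (\<Sum>j<N. (1 / real N) *\<^sub>R g (x j))"
    using ne by (intro sum.cong) auto
  finally show ?thesis by (simp add: scaleR_sum_right)
qed

lemma Xalpha_empirical_measure:
  "N \<ge> 1 \<Longrightarrow> Xalpha \<alpha> F (empirical_measure N x) = weighted_mean (cbo_weight \<alpha> F) N x"
  by (simp add: Xalpha_def weighted_mean_def integral_empirical_measure)

lemma weighted_mean_minus:
  assumes "(\<Sum>j<N. w (x j)) \<noteq> 0"
  shows "weighted_mean w N x - c = (1 / (\<Sum>j<N. w (x j))) *\<^sub>R (\<Sum>j<N. w (x j) *\<^sub>R (x j - c))"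
proof -
  have "(\<Sum>j<N. w (x j) *\<^sub>R (x j - c)) = (\<Sum>j<N. w (x j) *\<^sub>R x j) - (\<Sum>j<N. w (x j)) *\<^sub>R c"
    by (simp add: scaleR_diff_right sum_subtractf scaleR_sum_left)
  then show ?thesis using assms by (simp add: weighted_mean_def scaleR_diff_right)
qed

lemma sum_weighted_deviation_eq_0:
  assumes "(\<Sum>j<N. w (x j)) \<noteq> 0"
  shows "(\<Sum>j<N. w (x j) *\<^sub>R (x j - weighted_mean w N x)) = 0"
  using weighted_mean_minus[where w=w and N=N and x=x and c="weighted_mean w N x"] assms by simp

lemma norm_weighted_mean_le:
  assumes "N \<ge> 1" and "\<And>j. j < N \<Longrightarrow> w (x j) > 0" and "\<And>j. j < N \<Longrightarrow> norm (x j) \<le> R"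
  shows "norm (weighted_mean w N x) \<le> R"
proof -
  define S where "S = (\<Sum>j<N. w (x j))"
  have S_pos: "S > 0" unfolding S_def using assms(1,2) by (intro sum_pos) (auto simp: lessThan_empty_iff)
  have "norm (\<Sum>j<N. w (x j) *\<^sub>R x j) \<le> (\<Sum>j<N. w (x j) * R)"
    using assms(2,3)
    by (intro order_trans[OF norm_sum] sum_mono) (auto simp: abs_of_pos intro!: mult_left_mono less_imp_le)
  also have "\<dots> = S * R" by (simp add: S_def sum_distrib_right)
  finally show ?thesis
    using S_pos by (simp add: weighted_mean_def S_def[symmetric] pos_divide_le_eq mult.commute)
qed

lemma weighted_mean_lipschitz:
  assumes N: "N \<ge> 1" and R: "\<And>z. z \<in> D \<Longrightarrow> norm z \<le> R"
    and wl: "wl > 0" and w_bounds: "\<And>z. z \<in> D \<Longrightarrow> wl \<le> w z \<and> w z \<le> wu"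
    and w_lip: "Lw-lipschitz_on D w"
    and x: "\<And>j. j < N \<Longrightarrow> x j \<in> D" and y: "\<And>j. j < N \<Longrightarrow> y j \<in> D"
  shows "norm (weighted_mean w N x - weighted_mean w N y)
    \<le> ((2 * R * Lw + wu) / wl) * ((1 / real N) * (\<Sum>j<N. norm (x j - y j)))"
proof -
  define Sx where "Sx = (\<Sum>j<N. w (x j))"
  define my where "my = weighted_mean w N y"
  define L where "L = 2 * R * Lw + wu"
  have "(\<Sum>j<N. wl) \<le> Sx" unfolding Sx_def using w_bounds x by (intro sum_mono) auto
  then have Sx_ge: "real N * wl \<le> Sx" by simp
  have Nwl_pos: "real N * wl > 0" using N wl by simp
  have w_pos: "\<And>z. z \<in> D \<Longrightarrow> w z > 0" using w_bounds wl by (meson less_le_trans)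
  have "(\<Sum>j<N. w (y j)) > 0" using N w_pos y by (intro sum_pos) (auto simp: lessThan_empty_iff)
  then have centered: "(\<Sum>j<N. w (y j) *\<^sub>R (y j - my)) = 0"
    unfolding my_def by (intro sum_weighted_deviation_eq_0) simp
  have "weighted_mean w N x - my = (1 / Sx) *\<^sub>R (\<Sum>j<N. w (x j) *\<^sub>R (x j - my) - w (y j) *\<^sub>R (y j - my))"
    using weighted_mean_minus[where w=w and N=N and x=x and c=my] Sx_ge Nwl_pos centered
    by (simp add: Sx_def sum_subtractf)
  also have "\<dots> = (1 / Sx) *\<^sub>R (\<Sum>j<N. (w (x j) - w (y j)) *\<^sub>R (x j - my) + w (y j) *\<^sub>R (x j - y j))"
    by (simp add: algebra_simps)
  finally have diff_eq: "weighted_mean w N x - my = \<dots>" .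
  have my_le: "norm my \<le> R"
    unfolding my_def using N w_pos y R by (intro norm_weighted_mean_le) auto
  have "Lw \<ge> 0" using w_lip by (rule lipschitz_on_nonneg)
  moreover have "R \<ge> 0" "wu \<ge> 0" using norm_ge_zero[of "x 0"] R[OF x[of 0]] w_bounds[OF x[of 0]] wl N
    by linarith+
  ultimately have L_nonneg: "L \<ge> 0" unfolding L_def by simp
  have term_le: "norm ((w (x j) - w (y j)) *\<^sub>R (x j - my) + w (y j) *\<^sub>R (x j - y j))
      \<le> L * norm (x j - y j)" if j: "j < N" for j
  proof -
    have "\<bar>w (x j) - w (y j)\<bar> \<le> Lw * norm (x j - y j)"
      using lipschitz_onD[OF w_lip x[OF j] y[OF j]] by (simp add: dist_norm dist_real_def)
    moreover have "norm (x j - my) \<le> 2 * R"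
      using norm_triangle_ineq4[of "x j" my] R[OF x[OF j]] my_le by simp
    ultimately have "norm ((w (x j) - w (y j)) *\<^sub>R (x j - my)) \<le> Lw * norm (x j - y j) * (2 * R)"
      by (simp add: mult_mono')
    moreover have "norm (w (y j) *\<^sub>R (x j - y j)) \<le> wu * norm (x j - y j)"
      using w_bounds[OF y[OF j]] w_pos[OF y[OF j]] by (simp add: mult_right_mono)
    ultimately show ?thesis
      unfolding L_def by (smt (verit) norm_triangle_ineq distrib_right mult.commute mult.left_commute)
  qed
  have "norm (\<Sum>j<N. (w (x j) - w (y j)) *\<^sub>R (x j - my) + w (y j) *\<^sub>R (x j - y j))
      \<le> (\<Sum>j<N. L * norm (x j - y j))"
    by (intro order_trans[OF norm_sum] sum_mono term_le) simp
  then have "norm (weighted_mean w N x - weighted_mean w N y) \<le> (1 / Sx) * (\<Sum>j<N. L * norm (x j - y j))"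
    unfolding my_def[symmetric] diff_eq using Sx_ge Nwl_pos by (simp add: divide_right_mono)
  also have "\<dots> \<le> (1 / (real N * wl)) * (\<Sum>j<N. L * norm (x j - y j))"
    using Sx_ge Nwl_pos L_nonneg by (intro mult_right_mono divide_left_mono sum_nonneg) auto
  also have "\<dots> = (L / wl) * ((1 / real N) * (\<Sum>j<N. norm (x j - y j)))"
    by (simp add: sum_distrib_left mult.commute)
  finally show ?thesis unfolding L_def .
qed

lemma lipschitz_on_exp_atMost: "(exp c)-lipschitz_on {..c::real} exp"
proof (rule lipschitz_onI)
  have le: "exp b - exp a \<le> exp c * (b - a)" if "a \<le> b" "b \<le> c" for a b :: real
  proof -
    have "exp b * (1 + (a - b)) \<le> exp b * exp (a - b)"
      by (intro mult_left_mono exp_ge_add_one_self) auto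
    then have "exp b - exp a \<le> exp b * (b - a)" by (simp add: exp_diff algebra_simps)
    also have "\<dots> \<le> exp c * (b - a)" using that by (intro mult_right_mono) auto
    finally show ?thesis .
  qed
  fix x y assume "x \<in> {..c}" "y \<in> {..c}"
  then show "dist (exp x) (exp y) \<le> exp c * dist x y"
    using le[of x y] le[of y x] by (cases "x \<le> y") (auto simp: dist_real_def abs_if)
qed simp

lemma continuous_on_if_lipschitz_growth:
  fixes F :: "'a::real_normed_vector \<Rightarrow> real"
  assumes L: "L \<ge> 0" and F: "\<And>x y. \<bar>F x - F y\<bar> \<le> L * (1 + norm x + norm y) * norm (x - y)"
  shows "continuous_on UNIV F"
proof -
  have lip: "(L * (1 + 2 * r))-lipschitz_on (cball (0::'a) r) F" if "r \<ge> 0" for r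
  proof (rule lipschitz_onI)
    fix x y :: 'a assume "x \<in> cball 0 r" "y \<in> cball 0 r"
    then have "L * (1 + norm x + norm y) * norm (x - y) \<le> L * (1 + 2 * r) * norm (x - y)"
      using L by (intro mult_right_mono mult_left_mono) auto
    then show "dist (F x) (F y) \<le> L * (1 + 2 * r) * dist x y"
      using F[of x y] by (simp add: dist_norm dist_real_def)
  qed (use L that in simp)
  have "isCont F x" for x
  proof -
    have "continuous_on (ball 0 (norm x + 1)) F"
      by (rule lipschitz_on_continuous_on[OF lipschitz_on_subset[OF lip ball_subset_cball]]) simp
    then show ?thesis by (rule continuous_on_interior) (simp add: interior_open)
  qed
  then show ?thesis by (simp add: continuous_at_imp_continuous_on)
qed

lemma cbo_weight_bounds:
  assumes "\<alpha> \<ge> 0" "\<bar>F z\<bar> \<le> B"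
  shows "exp (- \<alpha> * B) \<le> cbo_weight \<alpha> F z" "cbo_weight \<alpha> F z \<le> exp (\<alpha> * B)"
  using assms mult_left_mono[of "- F z" B \<alpha>] mult_left_mono[of "F z" B \<alpha>]
  by (auto simp: cbo_weight_def)

lemma lipschitz_on_cbo_weight:
  assumes "\<alpha> \<ge> 0" and F_lip: "L-lipschitz_on D F" and F_bound: "\<And>z. z \<in> D \<Longrightarrow> \<bar>F z\<bar> \<le> B"
  shows "(exp (\<alpha> * B) * (\<alpha> * L))-lipschitz_on D (cbo_weight \<alpha> F)"
proof -
  have "(\<bar>- \<alpha>\<bar> * L)-lipschitz_on D (\<lambda>z. - \<alpha> * F z)"
    by (rule lipschitz_on_cmult_real[OF F_lip])
  moreover have "- \<alpha> * F z \<le> \<alpha> * B" if "z \<in> D" for z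
    using mult_left_mono[of "- F z" B \<alpha>] F_bound[OF that] assms(1) by (simp add: abs_le_iff)
  then have "(\<lambda>z. - \<alpha> * F z) ` D \<subseteq> {..\<alpha> * B}" by auto
  ultimately have "(exp (\<alpha> * B) * (\<bar>- \<alpha>\<bar> * L))-lipschitz_on D (\<lambda>z. exp (- \<alpha> * F z))"
    by (intro lipschitz_on_compose2[where g=exp] lipschitz_on_subset[OF lipschitz_on_exp_atMost])
  then show ?thesis using assms(1) by (simp add: cbo_weight_def[abs_def])
qed

lemma cbo_update_fst:
  "fst (cbo_update D dt lam \<sigma> \<sigma>0 m t z (x, v)) =
     closest_point D (x + dt *\<^sub>R (if t then v else cbo_W lam \<sigma> \<sigma>0 m x z))"
  by (simp add: cbo_update_def Let_def)

lemma cbo_update_snd: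
  "snd (cbo_update D dt lam \<sigma> \<sigma>0 m t z (x, v)) = (if t then v else cbo_W lam \<sigma> \<sigma>0 m x z)"
  by (simp add: cbo_update_def Let_def)

lemma norm_cbo_W_diff_le:
  fixes m x m' x' z :: "real^'d"
  assumes "lam \<ge> 0" "\<sigma> \<ge> 0"
  shows "norm (cbo_W lam \<sigma> \<sigma>0 m x z - cbo_W lam \<sigma> \<sigma>0 m' x' z)
    \<le> (real CARD('d) * lam + \<sigma> * (\<Sum>l\<in>UNIV. \<bar>z $ l\<bar>)) * (norm (m - m') + norm (x - x'))"
proof -
  define c where "c = (m - x) - (m' - x')"
  have c_le: "norm c \<le> norm (m - m') + norm (x - x')"
    using norm_triangle_ineq4[of "m - m'" "x - x'"] by (simp add: c_def algebra_simps)
  have component_le: "\<bar>(cbo_W lam \<sigma> \<sigma>0 m x z - cbo_W lam \<sigma> \<sigma>0 m' x' z) $ l\<bar>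
      \<le> (lam + \<sigma> * \<bar>z $ l\<bar>) * norm c" for l
  proof -
    define a where "a = \<bar>(m - x) $ l\<bar> - \<bar>(m' - x') $ l\<bar>"
    have "(cbo_W lam \<sigma> \<sigma>0 m x z - cbo_W lam \<sigma> \<sigma>0 m' x' z) $ l = lam * c $ l + \<sigma> * a * z $ l"
      unfolding cbo_W_def c_def a_def by (simp add: algebra_simps)
    then have "\<bar>(cbo_W lam \<sigma> \<sigma>0 m x z - cbo_W lam \<sigma> \<sigma>0 m' x' z) $ l\<bar>
        \<le> lam * \<bar>c $ l\<bar> + \<sigma> * \<bar>a\<bar> * \<bar>z $ l\<bar>"
      using assms abs_triangle_ineq[of "lam * c $ l" "\<sigma> * a * z $ l"] by (simp add: abs_mult)
    also have "\<dots> \<le> lam * \<bar>c $ l\<bar> + \<sigma> * \<bar>c $ l\<bar> * \<bar>z $ l\<bar>"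
      using assms by (intro add_left_mono mult_right_mono mult_left_mono) (auto simp: a_def c_def)
    also have "\<dots> = (lam + \<sigma> * \<bar>z $ l\<bar>) * \<bar>c $ l\<bar>" by (simp add: algebra_simps)
    also have "\<dots> \<le> (lam + \<sigma> * \<bar>z $ l\<bar>) * norm c"
      using assms by (intro mult_left_mono component_le_norm_cart) auto
    finally show ?thesis .
  qed
  have "norm (cbo_W lam \<sigma> \<sigma>0 m x z - cbo_W lam \<sigma> \<sigma>0 m' x' z) \<le> (\<Sum>l\<in>UNIV. (lam + \<sigma> * \<bar>z $ l\<bar>) * norm c)"
    by (intro order_trans[OF norm_le_l1_cart] sum_mono component_le)
  also have "\<dots> = (real CARD('d) * lam + \<sigma> * (\<Sum>l\<in>UNIV. \<bar>z $ l\<bar>)) * norm c"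
    by (simp add: sum.distrib sum_distrib_left sum_distrib_right algebra_simps)
  also have "\<dots> \<le> (real CARD('d) * lam + \<sigma> * (\<Sum>l\<in>UNIV. \<bar>z $ l\<bar>)) * (norm (m - m') + norm (x - x'))"
    using assms c_le by (intro mult_left_mono) (auto intro!: add_nonneg_nonneg mult_nonneg_nonneg sum_nonneg)
  finally show ?thesis .
qed

lemma borel_measurable_vec_iff:
  fixes f :: "'b \<Rightarrow> real^'n"
  shows "f \<in> borel_measurable N \<longleftrightarrow> (\<forall>l. (\<lambda>x. f x $ l) \<in> borel_measurable N)"
proof
  assume "f \<in> borel_measurable N"
  then have "(\<lambda>x. f x \<bullet> axis l 1) \<in> borel_measurable N" for l
    by (intro borel_measurable_inner) auto
  then show "\<forall>l. (\<lambda>x. f x $ l) \<in> borel_measurable N" by (simp add: inner_axis)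
next
  assume components: "\<forall>l. (\<lambda>x. f x $ l) \<in> borel_measurable N"
  have "(\<lambda>x. f x \<bullet> b) \<in> borel_measurable N" if b: "b \<in> Basis" for b
  proof -
    obtain l where "b = axis l 1" using b unfolding Basis_vec_def Basis_real_def by blast
    then show ?thesis using components by (simp add: inner_axis)
  qed
  then show "f \<in> borel_measurable N" using borel_measurable_euclidean_space by blast
qed

lemma borel_measurable_vec_nth[measurable]:
  fixes f :: "'b \<Rightarrow> real^'n"
  shows "f \<in> borel_measurable N \<Longrightarrow> (\<lambda>x. f x $ l) \<in> borel_measurable N"
  using borel_measurable_vec_iff by blast

lemma borel_measurable_cbo_W[measurable]:
  assumes [measurable]: "m \<in> borel_measurable N" "x \<in> borel_measurable N" "z \<in> borel_measurable N"
  shows "(\<lambda>\<omega>. cbo_W lam \<sigma> \<sigma>0 (m \<omega>) (x \<omega>) (z \<omega>)) \<in> borel_measurable N"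
  by (rule borel_measurable_vec_iff[THEN iffD2]) (simp add: cbo_W_def)

lemma measurable_cbo_update:
  fixes D :: "(real^'d) set"
  assumes D: "convex D" "closed D" "D \<noteq> {}"
    and [measurable]: "m \<in> borel_measurable N" "t \<in> N \<rightarrow>\<^sub>M count_space UNIV"
      "z \<in> borel_measurable N" "x \<in> borel_measurable N" "v \<in> borel_measurable N"
  shows "(\<lambda>\<omega>. fst (cbo_update D dt lam \<sigma> \<sigma>0 (m \<omega>) (t \<omega>) (z \<omega>) (x \<omega>, v \<omega>))) \<in> borel_measurable N"
    and "(\<lambda>\<omega>. snd (cbo_update D dt lam \<sigma> \<sigma>0 (m \<omega>) (t \<omega>) (z \<omega>) (x \<omega>, v \<omega>))) \<in> borel_measurable N"
proof -
  have velocity: "(\<lambda>\<omega>. if t \<omega> then v \<omega> else cbo_W lam \<sigma> \<sigma>0 (m \<omega>) (x \<omega>) (z \<omega>)) \<in> borel_measurable N"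
    by measurable
  then show "(\<lambda>\<omega>. snd (cbo_update D dt lam \<sigma> \<sigma>0 (m \<omega>) (t \<omega>) (z \<omega>) (x \<omega>, v \<omega>))) \<in> borel_measurable N"
    by (simp only: cbo_update_snd)
  have "(\<lambda>\<omega>. closest_point D (x \<omega> + dt *\<^sub>R (if t \<omega> then v \<omega> else cbo_W lam \<sigma> \<sigma>0 (m \<omega>) (x \<omega>) (z \<omega>))))
      \<in> borel_measurable N"
    using velocity
    by (intro borel_measurable_continuous_on[OF continuous_on_closest_point[OF D]]) measurable
  then show "(\<lambda>\<omega>. fst (cbo_update D dt lam \<sigma> \<sigma>0 (m \<omega>) (t \<omega>) (z \<omega>) (x \<omega>, v \<omega>))) \<in> borel_measurable N"
    by (simp only: cbo_update_fst)
qed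

lemma (in prob_space) expectation_abs_le_sqrt_second_moment:
  fixes X :: "'a \<Rightarrow> real"
  assumes "integrable M X" "integrable M (\<lambda>\<omega>. (X \<omega>)\<^sup>2)"
  shows "(\<integral>\<omega>. \<bar>X \<omega>\<bar> \<partial>M) \<le> sqrt (\<integral>\<omega>. (X \<omega>)\<^sup>2 \<partial>M)"
proof (rule real_le_rsqrt)
  have "0 \<le> (\<integral>\<omega>. (\<bar>X \<omega>\<bar> - (\<integral>\<omega>. \<bar>X \<omega>\<bar> \<partial>M))\<^sup>2 \<partial>M)" by simp
  also have "\<dots> = (\<integral>\<omega>. \<bar>X \<omega>\<bar>\<^sup>2 \<partial>M) - (\<integral>\<omega>. \<bar>X \<omega>\<bar> \<partial>M)\<^sup>2"
    using assms by (intro variance_eq) auto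
  finally show "(\<integral>\<omega>. \<bar>X \<omega>\<bar> \<partial>M)\<^sup>2 \<le> (\<integral>\<omega>. (X \<omega>)\<^sup>2 \<partial>M)" by simp
qed

lemma (in prob_space) expectation_abs_sum_orthogonal_le:
  fixes Z :: "nat \<Rightarrow> 'a \<Rightarrow> real"
  assumes meas: "\<And>j. j < N \<Longrightarrow> Z j \<in> borel_measurable M"
    and bound: "\<And>j. j < N \<Longrightarrow> AE \<omega> in M. \<bar>Z j \<omega>\<bar> \<le> B" and "B \<ge> 0"
    and orth: "\<And>j j'. j < N \<Longrightarrow> j' < N \<Longrightarrow> j \<noteq> j' \<Longrightarrow> (\<integral>\<omega>. Z j \<omega> * Z j' \<omega> \<partial>M) = 0"
  shows "(\<integral>\<omega>. \<bar>\<Sum>j<N. Z j \<omega>\<bar> \<partial>M) \<le> B * sqrt (real N)"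
proof -
  have prod_bound: "AE \<omega> in M. \<bar>Z j \<omega> * Z j' \<omega>\<bar> \<le> B * B" if "j < N" "j' < N" for j j'
    using bound[OF that(1)] bound[OF that(2)]
  proof eventually_elim
    case (elim \<omega>)
    then show ?case unfolding abs_mult by (intro mult_mono') auto
  qed
  have int_prod: "integrable M (\<lambda>\<omega>. Z j \<omega> * Z j' \<omega>)" if "j < N" "j' < N" for j j'
  proof (rule integrable_const_bound[where B="B * B"])
    show "AE \<omega> in M. norm (Z j \<omega> * Z j' \<omega>) \<le> B * B" using prod_bound[OF that] by simp
    show "(\<lambda>\<omega>. Z j \<omega> * Z j' \<omega>) \<in> borel_measurable M"
      using meas[OF that(1)] meas[OF that(2)] by (rule borel_measurable_times)
  qed
  have int_Z: "integrable M (Z j)" if "j < N" for j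
    by (rule integrable_const_bound[where B=B]) (use bound[OF that] meas[OF that] in simp_all)
  have square: "(\<lambda>\<omega>. (\<Sum>j<N. Z j \<omega>)\<^sup>2) = (\<lambda>\<omega>. \<Sum>j<N. \<Sum>j'<N. Z j \<omega> * Z j' \<omega>)"
    by (simp add: power2_eq_square sum_product)
  have int_row: "integrable M (\<lambda>\<omega>. \<Sum>j'<N. Z j \<omega> * Z j' \<omega>)" if "j < N" for j
    using that by (intro Bochner_Integration.integrable_sum int_prod) auto
  have "(\<integral>\<omega>. (\<Sum>j<N. Z j \<omega>)\<^sup>2 \<partial>M) = (\<Sum>j<N. (\<integral>\<omega>. (\<Sum>j'<N. Z j \<omega> * Z j' \<omega>) \<partial>M))"
    unfolding square using int_row by (intro Bochner_Integration.integral_sum) auto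
  also have "\<dots> = (\<Sum>j<N. \<Sum>j'<N. (\<integral>\<omega>. Z j \<omega> * Z j' \<omega> \<partial>M))"
    using int_prod by (intro sum.cong refl Bochner_Integration.integral_sum) auto
  also have "\<dots> = (\<Sum>j<N. (\<integral>\<omega>. Z j \<omega> * Z j \<omega> \<partial>M))"
  proof (rule sum.cong[OF refl])
    fix j assume "j \<in> {..<N}"
    then have "(\<Sum>j'<N. (\<integral>\<omega>. Z j \<omega> * Z j' \<omega> \<partial>M)) = (\<Sum>j'\<in>{j}. (\<integral>\<omega>. Z j \<omega> * Z j' \<omega> \<partial>M))"
      using orth by (intro sum.mono_neutral_right) auto
    then show "(\<Sum>j'<N. (\<integral>\<omega>. Z j \<omega> * Z j' \<omega> \<partial>M)) = (\<integral>\<omega>. Z j \<omega> * Z j \<omega> \<partial>M)" by simp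
  qed
  also have "\<dots> \<le> (\<Sum>j<N. (\<integral>\<omega>. B * B \<partial>M))"
  proof (rule sum_mono)
    fix j assume j: "j \<in> {..<N}"
    show "(\<integral>\<omega>. Z j \<omega> * Z j \<omega> \<partial>M) \<le> (\<integral>\<omega>. B * B \<partial>M)"
    proof (rule integral_mono_AE)
      show "AE \<omega> in M. Z j \<omega> * Z j \<omega> \<le> B * B"
        using j by (intro eventually_mono[OF prod_bound[of j j]]) auto
    qed (use int_prod j in simp_all)
  qed
  finally have "(\<integral>\<omega>. (\<Sum>j<N. Z j \<omega>)\<^sup>2 \<partial>M) \<le> real N * B\<^sup>2" by (simp add: power2_eq_square prob_space)
  then have "sqrt (\<integral>\<omega>. (\<Sum>j<N. Z j \<omega>)\<^sup>2 \<partial>M) \<le> sqrt (real N * B\<^sup>2)" by (rule real_sqrt_le_mono)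
  moreover have "(\<integral>\<omega>. \<bar>\<Sum>j<N. Z j \<omega>\<bar> \<partial>M) \<le> sqrt (\<integral>\<omega>. (\<Sum>j<N. Z j \<omega>)\<^sup>2 \<partial>M)"
  proof (rule expectation_abs_le_sqrt_second_moment)
    show "integrable M (\<lambda>\<omega>. \<Sum>j<N. Z j \<omega>)"
      by (intro Bochner_Integration.integrable_sum int_Z) simp
    show "integrable M (\<lambda>\<omega>. (\<Sum>j<N. Z j \<omega>)\<^sup>2)"
      unfolding square by (intro Bochner_Integration.integrable_sum int_row) simp
  qed
  moreover have "sqrt (real N * B\<^sup>2) = B * sqrt (real N)"
    using \<open>B \<ge> 0\<close> by (simp add: real_sqrt_mult)
  ultimately show ?thesis by linarith
qed

lemma coupled_recursion_bound:
  fixes a b :: "nat \<Rightarrow> real"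
  assumes "a 0 = 0" "b 0 = 0" "K \<ge> 0" "dt \<ge> 0" "0 \<le> p" "p \<le> 1" "\<epsilon> \<ge> 0"
    and a_Suc: "\<And>k. a (Suc k) \<le> a k + dt * b (Suc k)"
    and b_Suc: "\<And>k. b (Suc k) \<le> p * b k + (1 - p) * (K * (a k + \<epsilon>))"
  shows "a k + b k \<le> (1 + K) * exp (K * (real k * dt)) * \<epsilon>"
proof -
  have growth: "a k + \<epsilon> \<le> (1 + K * dt) ^ k * \<epsilon> \<and> b k \<le> K * ((1 + K * dt) ^ k * \<epsilon>)" for k
  proof (induction k)
    case (Suc k)
    define c where "c = (1 + K * dt) ^ k * \<epsilon>"
    have c_nonneg: "c \<ge> 0" using assms unfolding c_def by simp
    have a_le: "a k + \<epsilon> \<le> c" and b_le: "b k \<le> K * c" using Suc.IH unfolding c_def by auto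
    have "K * (a k + \<epsilon>) \<le> K * c" using a_le \<open>K \<ge> 0\<close> by (rule mult_left_mono)
    then have "p * b k + (1 - p) * (K * (a k + \<epsilon>)) \<le> p * (K * c) + (1 - p) * (K * c)"
      using b_le assms(5,6) by (intro add_mono[OF mult_left_mono mult_left_mono]) auto
    then have b_Suc_le: "b (Suc k) \<le> K * c" using b_Suc[of k] by (simp add: algebra_simps)
    have "a (Suc k) + \<epsilon> \<le> c + dt * (K * c)"
      using a_Suc[of k] a_le mult_left_mono[OF b_Suc_le \<open>dt \<ge> 0\<close>] by linarith
    moreover have "K * c \<le> K * ((1 + K * dt) * c)"
      using c_nonneg assms(3,4) by (intro mult_left_mono) (auto simp: algebra_simps)
    ultimately show ?case using b_Suc_le by (simp add: c_def algebra_simps)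
  qed (use assms in simp)
  have "(1 + K * dt) ^ k \<le> exp (K * dt) ^ k"
    using assms(3,4) by (intro power_mono exp_ge_add_one_self_aux) auto
  also have "\<dots> = exp (K * (real k * dt))" by (simp add: exp_of_nat_mult[symmetric] mult_ac)
  finally have "(1 + K) * ((1 + K * dt) ^ k * \<epsilon>) \<le> (1 + K) * (exp (K * (real k * dt)) * \<epsilon>)"
    using assms(3,7) by (intro mult_left_mono mult_right_mono) auto
  moreover have "(1 + K) * ((1 + K * dt) ^ k * \<epsilon>) = (1 + K * dt) ^ k * \<epsilon> + K * ((1 + K * dt) ^ k * \<epsilon>)"
    by (simp add: algebra_simps)
  ultimately show ?thesis using growth[of k] \<open>\<epsilon> \<ge> 0\<close> by (simp add: mult.assoc)
qed

section \<open>Independence of the primitive inputs\<close>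

lemma (in prob_space) indep_sets_reindex:
  assumes indep: "indep_sets F I" and inj: "inj_on f J" and sub: "f ` J \<subseteq> I"
  shows "indep_sets (\<lambda>j. F (f j)) J"
  unfolding indep_sets_def
proof (intro conjI ballI allI impI)
  fix j assume "j \<in> J" then show "F (f j) \<subseteq> events" using indep sub unfolding indep_sets_def by auto
next
  fix K A assume K: "K \<subseteq> J" "K \<noteq> {}" "finite K" and A: "A \<in> Pi K (\<lambda>j. F (f j))"
  define A' where "A' = (\<lambda>s. A (the_inv_into K f s))"
  have inj_K: "inj_on f K" using inj K inj_on_subset by blast
  have inv: "\<And>j. j \<in> K \<Longrightarrow> the_inv_into K f (f j) = j" using inj_K by (simp add: the_inv_into_f_f)
  have "f ` K \<subseteq> I" "f ` K \<noteq> {}" "finite (f ` K)" using K sub by auto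
  moreover have "A' \<in> Pi (f ` K) F" using A inv by (auto simp: A'_def)
  ultimately have "prob (\<Inter>s\<in>f ` K. A' s) = (\<Prod>s\<in>f ` K. prob (A' s))"
    using indep unfolding indep_sets_def by blast
  moreover have "(\<Inter>s\<in>f ` K. A' s) = (\<Inter>j\<in>K. A j)" using inv by (auto simp: A'_def)
  moreover have "(\<Prod>s\<in>f ` K. prob (A' s)) = (\<Prod>j\<in>K. prob (A j))"
    using inj_K inv by (simp add: prod.reindex A'_def)
  ultimately show "prob (\<Inter>j\<in>K. A j) = (\<Prod>j\<in>K. prob (A j))" by simp
qed

locale cbo_inputs = prob_space M
  for M :: "'a measure" and X0 V0 :: "nat \<Rightarrow> 'a \<Rightarrow> real^'d" and Tb :: "nat \<Rightarrow> nat \<Rightarrow> 'a \<Rightarrow> bool"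
    and \<xi> :: "nat \<Rightarrow> nat \<Rightarrow> 'a \<Rightarrow> real^'d" +
  assumes measurable_init: "\<And>i. (\<lambda>\<omega>. (X0 i \<omega>, V0 i \<omega>)) \<in> M \<rightarrow>\<^sub>M borel"
    and measurable_coin: "\<And>k i. Tb k i \<in> M \<rightarrow>\<^sub>M count_space UNIV"
    and measurable_noise: "\<And>k i l. (\<lambda>\<omega>. \<xi> k i \<omega> $ l) \<in> borel_measurable M"
    and indep_inputs: "indep_sets (cbo_sigmas M X0 V0 Tb \<xi>) UNIV"
begin

abbreviation "G \<equiv> cbo_sigmas M X0 V0 Tb \<xi>"

definition inputs_sigma :: "'d cbo_idx set \<Rightarrow> 'a measure" where
  "inputs_sigma S = sigma (space M) (\<Union>s\<in>S. G s)"

lemma cbo_sigmas_subset_events: "G s \<subseteq> events"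
  using indep_inputs unfolding indep_sets_def by auto

lemma cbo_sigmas_subset_Pow: "G s \<subseteq> Pow (space M)"
  using cbo_sigmas_subset_events sets.sets_into_space by blast

lemma space_inputs_sigma[simp]: "space (inputs_sigma S) = space M"
  using cbo_sigmas_subset_Pow unfolding inputs_sigma_def
  by (subst space_measure_of) auto

lemma sets_inputs_sigma: "sets (inputs_sigma S) = sigma_sets (space M) (\<Union>s\<in>S. G s)"
  using cbo_sigmas_subset_Pow unfolding inputs_sigma_def
  by (subst sets_measure_of) auto

lemma measurable_inputs_sigma_imp_M: "f \<in> inputs_sigma S \<rightarrow>\<^sub>M N \<Longrightarrow> f \<in> M \<rightarrow>\<^sub>M N"
proof -
  have "sets (inputs_sigma S) \<subseteq> events"
    unfolding sets_inputs_sigma using cbo_sigmas_subset_events by (intro sets.sigma_sets_subset) auto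
  then show "f \<in> inputs_sigma S \<rightarrow>\<^sub>M N \<Longrightarrow> f \<in> M \<rightarrow>\<^sub>M N" by (auto simp: measurable_def)
qed

lemma measurable_inputs_sigma_mono:
  "f \<in> inputs_sigma S \<rightarrow>\<^sub>M N \<Longrightarrow> S \<subseteq> S' \<Longrightarrow> f \<in> inputs_sigma S' \<rightarrow>\<^sub>M N"
  using sigma_sets_subseteq[of "\<Union>s\<in>S. G s" "\<Union>s\<in>S'. G s" "space M"]
  by (auto simp: measurable_def sets_inputs_sigma)

lemma measurable_inputs_sigma_vimage:
  assumes f: "f \<in> M \<rightarrow>\<^sub>M N" and "s \<in> S" and G_s: "G s = sets (vimage_algebra (space M) f N)"
  shows "f \<in> inputs_sigma S \<rightarrow>\<^sub>M N"
proof -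
  have f_space: "f \<in> space M \<rightarrow> space N" using f by (auto simp: measurable_def)
  have "f -` A \<inter> space M \<in> sets (inputs_sigma S)" if "A \<in> sets N" for A
  proof -
    have "f -` A \<inter> space M \<in> G s" unfolding G_s sets_vimage_algebra2[OF f_space] using that by auto
    then show ?thesis using \<open>s \<in> S\<close> unfolding sets_inputs_sigma by auto
  qed
  then show ?thesis using f_space by (auto simp: measurable_def)
qed

lemma measurable_init_inputs_sigma:
  "Init i \<in> S \<Longrightarrow> (\<lambda>\<omega>. (X0 i \<omega>, V0 i \<omega>)) \<in> inputs_sigma S \<rightarrow>\<^sub>M borel"
  by (rule measurable_inputs_sigma_vimage[OF measurable_init]) (auto simp: cbo_sigmas_def)

lemma measurable_coin_inputs_sigma: "Coin k i \<in> S \<Longrightarrow> Tb k i \<in> inputs_sigma S \<rightarrow>\<^sub>M count_space UNIV"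
  by (rule measurable_inputs_sigma_vimage[OF measurable_coin]) (auto simp: cbo_sigmas_def)

lemma measurable_noise_inputs_sigma:
  "Noise k i l \<in> S \<Longrightarrow> (\<lambda>\<omega>. \<xi> k i \<omega> $ l) \<in> borel_measurable (inputs_sigma S)"
  by (rule measurable_inputs_sigma_vimage[OF measurable_noise]) (auto simp: cbo_sigmas_def)

lemma measurable_noise_vec_inputs_sigma:
  "(\<And>l. Noise k i l \<in> S) \<Longrightarrow> \<xi> k i \<in> borel_measurable (inputs_sigma S)"
  by (simp add: borel_measurable_vec_iff measurable_noise_inputs_sigma)

lemma indep_var_inputs_sigma:
  assumes disj: "S1 \<inter> S2 = {}"
    and f: "f \<in> inputs_sigma S1 \<rightarrow>\<^sub>M N1" and g: "g \<in> inputs_sigma S2 \<rightarrow>\<^sub>M N2"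
  shows "indep_var N1 f N2 g"
proof -
  let ?I = "case_bool S1 S2"
  have "indep_sets G (\<Union>j\<in>UNIV. ?I j)"
    by (rule indep_sets_mono_index[OF _ indep_inputs]) auto
  moreover have "disjoint_family_on ?I UNIV"
    using disj by (auto simp: disjoint_family_on_def split: bool.splits)
  moreover have "Int_stable (G s)" for s
    by (cases s) (simp_all add: cbo_sigmas_def Int_stableI sets.Int)
  ultimately have indep: "indep_sets (\<lambda>j. sigma_sets (space M) (\<Union>i\<in>?I j. G i)) UNIV"
    by (intro indep_sets_collect_sigma) auto
  have preimages: "sigma_sets (space M) {h -` A \<inter> space M |A. A \<in> sets N'} \<subseteq> sets (inputs_sigma S)"
    if "h \<in> inputs_sigma S \<rightarrow>\<^sub>M N'" for h S N'
    using that by (intro sets.sigma_sets_subset[of _ "inputs_sigma S", simplified]) (auto simp: measurable_def)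
  show ?thesis
    unfolding indep_var_eq indep_set_def
  proof (intro conjI)
    show "random_variable N1 f" "random_variable N2 g"
      using f g by (auto intro: measurable_inputs_sigma_imp_M)
    show "indep_sets (case_bool (sigma_sets (space M) {f -` A \<inter> space M |A. A \<in> sets N1})
       (sigma_sets (space M) {g -` A \<inter> space M |A. A \<in> sets N2})) UNIV"
      using preimages[OF f] preimages[OF g] unfolding sets_inputs_sigma
      by (intro indep_sets_mono_sets[OF indep]) (auto split: bool.splits)
  qed
qed

lemma integral_mult_indep_inputs:
  fixes f g :: "'a \<Rightarrow> real"
  assumes "S1 \<inter> S2 = {}" "f \<in> borel_measurable (inputs_sigma S1)" "g \<in> borel_measurable (inputs_sigma S2)"
    "integrable M f" "integrable M g"
  shows "integrable M (\<lambda>\<omega>. f \<omega> * g \<omega>)"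
    and "(\<integral>\<omega>. f \<omega> * g \<omega> \<partial>M) = (\<integral>\<omega>. f \<omega> \<partial>M) * (\<integral>\<omega>. g \<omega> \<partial>M)"
  using indep_var_integrable[OF indep_var_inputs_sigma[OF assms(1-3)] assms(4,5)]
    indep_var_lebesgue_integral[OF indep_var_inputs_sigma[OF assms(1-3)] assms(4,5)] by auto

lemma prob_Int_indep_inputs:
  assumes disj: "S1 \<inter> S2 = {}" and A: "A \<in> sets (inputs_sigma S1)" and B: "B \<in> sets (inputs_sigma S2)"
  shows "prob (A \<inter> B) = prob A * prob B"
proof -
  have "(\<lambda>\<omega>. \<omega>) \<in> inputs_sigma S \<rightarrow>\<^sub>M inputs_sigma S" for S by simp
  then have indep: "indep_var (inputs_sigma S1) (\<lambda>\<omega>. \<omega>) (inputs_sigma S2) (\<lambda>\<omega>. \<omega>)"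
    using disj by (intro indep_var_inputs_sigma)
  have "(\<lambda>\<omega>. (\<omega>, \<omega>)) -` (A \<times> B) \<inter> space M = A \<inter> B"
    "(\<lambda>\<omega>. \<omega>) -` A \<inter> space M = A" "(\<lambda>\<omega>. \<omega>) -` B \<inter> space M = B"
    using sets.sets_into_space[OF A] sets.sets_into_space[OF B] by auto
  with indep_varD[OF indep A B] show ?thesis by simp
qed

lemma distr_pair_indep_inputs:
  assumes disj: "S1 \<inter> S2 = {}" and f: "f \<in> inputs_sigma S1 \<rightarrow>\<^sub>M N1" and g: "g \<in> inputs_sigma S2 \<rightarrow>\<^sub>M N2"
  shows "distr M (N1 \<Otimes>\<^sub>M N2) (\<lambda>\<omega>. (f \<omega>, g \<omega>)) = distr M N1 f \<Otimes>\<^sub>M distr M N2 g"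
proof -
  have rf: "random_variable N1 f" and rg: "random_variable N2 g"
    using f g by (auto intro: measurable_inputs_sigma_imp_M)
  then have fg: "random_variable (N1 \<Otimes>\<^sub>M N2) (\<lambda>x. (f x, g x))" by (rule measurable_Pair)
  interpret X: prob_space "distr M N1 f" by (rule prob_space_distr) fact
  interpret Y: prob_space "distr M N2 g" by (rule prob_space_distr) fact
  show ?thesis
  proof (rule pair_measure_eqI[symmetric])
    show "sigma_finite_measure (distr M N1 f)" "sigma_finite_measure (distr M N2 g)" ..
    show "sets (distr M N1 f \<Otimes>\<^sub>M distr M N2 g) = sets (distr M (N1 \<Otimes>\<^sub>M N2) (\<lambda>\<omega>. (f \<omega>, g \<omega>)))" by simp
    fix A B assume A: "A \<in> sets (distr M N1 f)" and B: "B \<in> sets (distr M N2 g)"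
    have fA: "f -` A \<inter> space M \<in> sets (inputs_sigma S1)" using f A by (auto simp: measurable_def)
    have gB: "g -` B \<inter> space M \<in> sets (inputs_sigma S2)" using g B by (auto simp: measurable_def)
    have "emeasure (distr M (N1 \<Otimes>\<^sub>M N2) (\<lambda>\<omega>. (f \<omega>, g \<omega>))) (A \<times> B)
        = emeasure M ((f -` A \<inter> space M) \<inter> (g -` B \<inter> space M))"
      using A B by (subst emeasure_distr[OF fg]) (auto intro!: arg_cong[where f="emeasure M"])
    also have "\<dots> = emeasure M (f -` A \<inter> space M) * emeasure M (g -` B \<inter> space M)"
      using prob_Int_indep_inputs[OF disj fA gB]
      by (simp add: emeasure_eq_measure measure_nonneg ennreal_mult)
    also have "\<dots> = emeasure (distr M N1 f) A * emeasure (distr M N2 g) B"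
      using rf rg A B by (simp add: emeasure_distr)
    finally show "emeasure (distr M N1 f) A * emeasure (distr M N2 g) B
        = emeasure (distr M (N1 \<Otimes>\<^sub>M N2) (\<lambda>\<omega>. (f \<omega>, g \<omega>))) (A \<times> B)" by simp
  qed
qed

lemma distr_noise_vec:
  "distr M borel (\<xi> k i) =
     distr (\<Pi>\<^sub>M l\<in>UNIV. distr M borel (\<lambda>\<omega>. \<xi> k i \<omega> $ l)) borel (\<lambda>f. \<chi> l. f l)"
proof -
  let ?X = "\<lambda>l \<omega>. \<xi> k i \<omega> $ l"
  have rv: "\<And>l. random_variable borel (?X l)" using measurable_noise by simp
  have "indep_sets (\<lambda>l. G (Noise k i l)) UNIV"
    by (rule indep_sets_reindex[OF indep_inputs]) (auto simp: inj_on_def)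
  then have "indep_vars (\<lambda>_. borel) ?X UNIV"
    unfolding indep_vars_def2 using rv by (simp add: cbo_sigmas_def sets_vimage_algebra2)
  then have joint: "distr M (\<Pi>\<^sub>M l\<in>UNIV. borel) (\<lambda>\<omega>. \<lambda>l\<in>UNIV. ?X l \<omega>) = (\<Pi>\<^sub>M l\<in>UNIV. distr M borel (?X l))"
    using indep_vars_iff_distr_eq_PiM[where I=UNIV and M'="\<lambda>_. borel" and X="?X"] rv by simp
  have vec: "(\<lambda>f. \<chi> l. f l) \<in> (\<Pi>\<^sub>M l\<in>(UNIV::'d set). (borel :: real measure)) \<rightarrow>\<^sub>M borel"
    by (simp add: borel_measurable_vec_iff)
  have restrict: "(\<lambda>\<omega>. \<lambda>l\<in>UNIV. ?X l \<omega>) \<in> M \<rightarrow>\<^sub>M (\<Pi>\<^sub>M l\<in>(UNIV::'d set). borel)"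
    using rv by (intro measurable_restrict) auto
  have "distr M borel (\<xi> k i) = distr M borel (\<lambda>\<omega>. (\<lambda>f. \<chi> l. f l) (\<lambda>l\<in>UNIV. ?X l \<omega>))"
    by (simp add: vec_lambda_eta)
  also have "\<dots> = distr (distr M (\<Pi>\<^sub>M l\<in>UNIV. borel) (\<lambda>\<omega>. \<lambda>l\<in>UNIV. ?X l \<omega>)) borel (\<lambda>f. \<chi> l. f l)"
    by (rule distr_distr[OF vec restrict, unfolded comp_def, symmetric])
  finally show ?thesis unfolding joint .
qed

end

text \<open>The inputs that the particle system at step k depends on, and those that the i-th
  mean-field copy at step k depends on.\<close>

definition history :: "nat \<Rightarrow> 'd cbo_idx set" where
  "history k = {s. case s of Init _ \<Rightarrow> True | Coin j _ \<Rightarrow> j < k | Noise j _ _ \<Rightarrow> j < k}"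

definition own_history :: "nat \<Rightarrow> nat \<Rightarrow> 'd cbo_idx set" where
  "own_history i k =
     {s. case s of Init i' \<Rightarrow> i' = i | Coin j i' \<Rightarrow> j < k \<and> i' = i | Noise j i' _ \<Rightarrow> j < k \<and> i' = i}"

lemma history_mono: "k \<le> k' \<Longrightarrow> history k \<subseteq> history k'"
  by (auto simp: history_def split: cbo_idx.splits)

lemma own_history_mono: "k \<le> k' \<Longrightarrow> own_history i k \<subseteq> own_history i k'"
  by (auto simp: own_history_def split: cbo_idx.splits)

lemma own_history_subset_history: "own_history i k \<subseteq> history k"
  by (auto simp: own_history_def history_def split: cbo_idx.splits)

lemma own_history_disjoint:
  assumes "i \<noteq> j" shows "own_history i k \<inter> own_history j k = {}"
proof (rule equals0I)
  fix s assume "s \<in> own_history i k \<inter> own_history j k"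
  then show False using assms by (cases s) (auto simp: own_history_def)
qed

text \<open>The first summand in the bracket is the Lipschitz constant of the empirical consensus
  point, the last one the constant in its law of large numbers.\<close>

definition coupling_rate :: "nat \<Rightarrow> real \<Rightarrow> real \<Rightarrow> real \<Rightarrow> real \<Rightarrow> real \<Rightarrow> real \<Rightarrow> real" where
  "coupling_rate d lam \<sigma> R wl wu Lw =
     real d * (lam + \<sigma>) * ((2 * R * Lw + wu) / wl + 1 + 2 * R * wu * real d / wl)"

lemma coupling_rate_nonneg:
  "lam \<ge> 0 \<Longrightarrow> \<sigma> \<ge> 0 \<Longrightarrow> R \<ge> 0 \<Longrightarrow> wl > 0 \<Longrightarrow> wu \<ge> 0 \<Longrightarrow> Lw \<ge> 0 \<Longrightarrow>
    coupling_rate d lam \<sigma> R wl wu Lw \<ge> 0"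
  unfolding coupling_rate_def by (intro mult_nonneg_nonneg add_nonneg_nonneg divide_nonneg_pos) auto

locale cbo_coupling = cbo_inputs M X0 V0 Tb \<xi>
  for M :: "'a measure" and X0 V0 Tb and \<xi> :: "nat \<Rightarrow> nat \<Rightarrow> 'a \<Rightarrow> real^'d" +
  fixes D :: "(real^'d) set" and F :: "real^'d \<Rightarrow> real"
    and \<alpha> lam \<sigma> \<sigma>0 dt p :: real and N :: nat and R wl wu Lw :: real
  assumes compact_D: "compact D" and convex_D: "convex D" and D_nonempty: "D \<noteq> {}"
    and AE_init_in_D: "AE \<omega> in M. \<forall>i. X0 i \<omega> \<in> D"
    and init_law: "\<And>i. distr M borel (\<lambda>\<omega>. (X0 i \<omega>, V0 i \<omega>)) = distr M borel (\<lambda>\<omega>. (X0 0 \<omega>, V0 0 \<omega>))"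
    and continuous_F: "continuous_on UNIV F"
    and norm_le_R: "\<And>z. z \<in> D \<Longrightarrow> norm z \<le> R"
    and wl_pos: "wl > 0"
    and weight_bounds: "\<And>z. z \<in> D \<Longrightarrow> wl \<le> cbo_weight \<alpha> F z \<and> cbo_weight \<alpha> F z \<le> wu"
    and weight_lipschitz: "Lw-lipschitz_on D (cbo_weight \<alpha> F)"
    and N_pos: "N \<ge> 1" and lam_nonneg: "lam \<ge> 0" and sigma_nonneg: "\<sigma> \<ge> 0" and dt_nonneg: "dt \<ge> 0"
    and p_nonneg: "0 \<le> p" and p_le_1: "p \<le> 1"
    and coin_law: "\<And>k i. distr M (count_space UNIV) (Tb k i) = measure_pmf (bernoulli_pmf p)"
    and noise_law: "\<And>k i l. distributed M lborel (\<lambda>\<omega>. \<xi> k i \<omega> $ l) std_normal_density"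
begin

abbreviation "w \<equiv> cbo_weight \<alpha> F"
abbreviation "P \<equiv> particles \<alpha> F D dt lam \<sigma> \<sigma>0 X0 V0 Tb \<xi> N"
abbreviation "Q \<equiv> mf_copies M \<alpha> F D dt lam \<sigma> \<sigma>0 X0 V0 Tb \<xi>"

definition mf_consensus :: "nat \<Rightarrow> nat \<Rightarrow> real^'d" where
  "mf_consensus k i = Xalpha \<alpha> F (distr M borel (\<lambda>\<omega>. fst (Q k \<omega> i)))"

lemma closed_D: "closed D"
  using compact_D by (rule compact_imp_closed)

lemma R_nonneg: "R \<ge> 0"
  using D_nonempty norm_le_R norm_ge_zero order_trans by blast

lemma wu_nonneg: "wu \<ge> 0"
  using D_nonempty weight_bounds wl_pos by force

lemma borel_measurable_weight[measurable]: "w \<in> borel_measurable borel"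
  using continuous_F unfolding cbo_weight_def[abs_def]
  by (intro borel_measurable_continuous_onI continuous_intros) auto

lemma particles_Suc:
  "P (Suc k) \<omega> i = cbo_update D dt lam \<sigma> \<sigma>0 (weighted_mean w N (\<lambda>j. fst (P k \<omega> j)))
     (Tb k i \<omega>) (\<xi> k i \<omega>) (fst (P k \<omega> i), snd (P k \<omega> i))"
  using N_pos by (simp add: Xalpha_empirical_measure)

lemma mf_copies_Suc:
  "Q (Suc k) \<omega> i = cbo_update D dt lam \<sigma> \<sigma>0 (mf_consensus k i)
     (Tb k i \<omega>) (\<xi> k i \<omega>) (fst (Q k \<omega> i), snd (Q k \<omega> i))"
  by (simp add: mf_consensus_def)

lemma measurable_particles:
  "(\<lambda>\<omega>. fst (P k \<omega> i)) \<in> borel_measurable (inputs_sigma (history k)) \<and>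
   (\<lambda>\<omega>. snd (P k \<omega> i)) \<in> borel_measurable (inputs_sigma (history k))"
proof (induction k arbitrary: i)
  case 0
  have "(\<lambda>\<omega>. (X0 i \<omega>, V0 i \<omega>)) \<in> inputs_sigma (history 0) \<rightarrow>\<^sub>M borel"
    by (rule measurable_init_inputs_sigma) (simp add: history_def)
  then have "(\<lambda>\<omega>. (X0 i \<omega>, V0 i \<omega>)) \<in> inputs_sigma (history 0) \<rightarrow>\<^sub>M borel \<Otimes>\<^sub>M borel"
    by (simp add: borel_prod)
  then show ?case by (simp add: measurable_pair_iff o_def)
next
  case (Suc k)
  let ?S = "inputs_sigma (history (Suc k))"
  have sub: "history k \<subseteq> history (Suc k)" by (rule history_mono) simp
  have pos: "\<And>j. (\<lambda>\<omega>. fst (P k \<omega> j)) \<in> borel_measurable ?S"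
    and vel: "(\<lambda>\<omega>. snd (P k \<omega> i)) \<in> borel_measurable ?S"
    using Suc.IH sub by (blast intro: measurable_inputs_sigma_mono)+
  have mean: "(\<lambda>\<omega>. weighted_mean w N (\<lambda>j. fst (P k \<omega> j))) \<in> borel_measurable ?S"
    using pos unfolding weighted_mean_def by measurable
  have coin: "Tb k i \<in> ?S \<rightarrow>\<^sub>M count_space UNIV"
    by (rule measurable_coin_inputs_sigma) (simp add: history_def)
  have noise: "\<xi> k i \<in> borel_measurable ?S"
    by (rule measurable_noise_vec_inputs_sigma) (simp add: history_def)
  show ?case
    unfolding particles_Suc
    using measurable_cbo_update[OF convex_D closed_D D_nonempty mean coin noise pos[of i] vel] by simp
qed

lemma measurable_mf_copies:
  "(\<lambda>\<omega>. fst (Q k \<omega> i)) \<in> borel_measurable (inputs_sigma (own_history i k)) \<and>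
   (\<lambda>\<omega>. snd (Q k \<omega> i)) \<in> borel_measurable (inputs_sigma (own_history i k))"
proof (induction k)
  case 0
  have "(\<lambda>\<omega>. (X0 i \<omega>, V0 i \<omega>)) \<in> inputs_sigma (own_history i 0) \<rightarrow>\<^sub>M borel"
    by (rule measurable_init_inputs_sigma) (simp add: own_history_def)
  then have "(\<lambda>\<omega>. (X0 i \<omega>, V0 i \<omega>)) \<in> inputs_sigma (own_history i 0) \<rightarrow>\<^sub>M borel \<Otimes>\<^sub>M borel"
    by (simp add: borel_prod)
  then show ?case by (simp add: measurable_pair_iff o_def)
next
  case (Suc k)
  let ?S = "inputs_sigma (own_history i (Suc k))"
  have sub: "own_history i k \<subseteq> own_history i (Suc k)" by (rule own_history_mono) simp
  have pos: "(\<lambda>\<omega>. fst (Q k \<omega> i)) \<in> borel_measurable ?S"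
    and vel: "(\<lambda>\<omega>. snd (Q k \<omega> i)) \<in> borel_measurable ?S"
    using Suc.IH sub by (blast intro: measurable_inputs_sigma_mono)+
  have coin: "Tb k i \<in> ?S \<rightarrow>\<^sub>M count_space UNIV"
    by (rule measurable_coin_inputs_sigma) (simp add: own_history_def)
  have noise: "\<xi> k i \<in> borel_measurable ?S"
    by (rule measurable_noise_vec_inputs_sigma) (simp add: own_history_def)
  show ?case
    unfolding mf_copies_Suc
    using measurable_cbo_update[OF convex_D closed_D D_nonempty measurable_const coin noise pos vel] by simp
qed

lemma measurable_mf_copies_history:
  "(\<lambda>\<omega>. fst (Q k \<omega> i)) \<in> borel_measurable (inputs_sigma (history k))"
  "(\<lambda>\<omega>. snd (Q k \<omega> i)) \<in> borel_measurable (inputs_sigma (history k))"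
  using measurable_mf_copies own_history_subset_history by (blast intro: measurable_inputs_sigma_mono)+

lemma borel_measurable_states:
  "(\<lambda>\<omega>. fst (P k \<omega> i)) \<in> borel_measurable M" "(\<lambda>\<omega>. snd (P k \<omega> i)) \<in> borel_measurable M"
  "(\<lambda>\<omega>. fst (Q k \<omega> i)) \<in> borel_measurable M" "(\<lambda>\<omega>. snd (Q k \<omega> i)) \<in> borel_measurable M"
  using measurable_particles measurable_mf_copies by (blast intro: measurable_inputs_sigma_imp_M)+

lemma AE_positions_in_D: "AE \<omega> in M. \<forall>k i. fst (P k \<omega> i) \<in> D \<and> fst (Q k \<omega> i) \<in> D"
proof (rule AE_mp[OF AE_init_in_D], intro AE_I2 impI allI)
  fix \<omega> k i assume "\<forall>i. X0 i \<omega> \<in> D"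
  then show "fst (P k \<omega> i) \<in> D \<and> fst (Q k \<omega> i) \<in> D"
    by (cases k) (auto simp: cbo_update_def Let_def closest_point_in_set[OF closed_D D_nonempty])
qed

context
  fixes Y :: "'a \<Rightarrow> real^'d"
  assumes Y_measurable[measurable]: "Y \<in> borel_measurable M" and AE_Y_in_D: "AE \<omega> in M. Y \<omega> \<in> D"
begin

lemma integrable_weight_of:
  "integrable M (\<lambda>\<omega>. w (Y \<omega>))" "integrable M (\<lambda>\<omega>. w (Y \<omega>) *\<^sub>R Y \<omega>)"
proof -
  have bounds: "AE \<omega> in M. norm (w (Y \<omega>)) \<le> wu \<and> norm (w (Y \<omega>) *\<^sub>R Y \<omega>) \<le> wu * R"
    using AE_Y_in_D
  proof eventually_elim
    case (elim \<omega>)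
    then have "0 \<le> w (Y \<omega>)" "w (Y \<omega>) \<le> wu" "norm (Y \<omega>) \<le> R"
      using weight_bounds[of "Y \<omega>"] wl_pos norm_le_R by auto
    then show ?case by (simp add: mult_mono')
  qed
  show "integrable M (\<lambda>\<omega>. w (Y \<omega>))"
    by (rule integrable_const_bound[where B=wu]) (use bounds in \<open>auto elim: AE_mp\<close>)
  show "integrable M (\<lambda>\<omega>. w (Y \<omega>) *\<^sub>R Y \<omega>)"
    by (rule integrable_const_bound[where B="wu * R"]) (use bounds in \<open>auto elim: AE_mp\<close>)
qed

lemma integral_weight_of_ge: "(\<integral>\<omega>. w (Y \<omega>) \<partial>M) \<ge> wl"
proof -
  have "(\<integral>\<omega>. wl \<partial>M) \<le> (\<integral>\<omega>. w (Y \<omega>) \<partial>M)"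
    using AE_Y_in_D weight_bounds by (intro integral_mono_AE integrable_weight_of) (auto elim: AE_mp)
  then show ?thesis by (simp add: prob_space)
qed

lemma Xalpha_distr_eq:
  "Xalpha \<alpha> F (distr M borel Y) = (1 / (\<integral>\<omega>. w (Y \<omega>) \<partial>M)) *\<^sub>R (\<integral>\<omega>. w (Y \<omega>) *\<^sub>R Y \<omega> \<partial>M)"
  by (simp add: Xalpha_def integral_distr)

lemma norm_Xalpha_distr_le: "norm (Xalpha \<alpha> F (distr M borel Y)) \<le> R"
proof -
  have "norm (\<integral>\<omega>. w (Y \<omega>) *\<^sub>R Y \<omega> \<partial>M) \<le> (\<integral>\<omega>. norm (w (Y \<omega>) *\<^sub>R Y \<omega>) \<partial>M)"
    by (rule integral_norm_bound)
  also have "\<dots> \<le> (\<integral>\<omega>. R * w (Y \<omega>) \<partial>M)"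
  proof (rule integral_mono_AE)
    show "AE \<omega> in M. norm (w (Y \<omega>) *\<^sub>R Y \<omega>) \<le> R * w (Y \<omega>)"
      using AE_Y_in_D
    proof eventually_elim
      case (elim \<omega>)
      then have "0 \<le> w (Y \<omega>)" "norm (Y \<omega>) \<le> R" using weight_bounds[of "Y \<omega>"] wl_pos norm_le_R by auto
      then show ?case by (simp add: mult_right_mono mult.commute)
    qed
    show "integrable M (\<lambda>\<omega>. norm (w (Y \<omega>) *\<^sub>R Y \<omega>))"
      using integrable_weight_of(2) by (rule integrable_norm)
  qed (use integrable_weight_of(1) in simp)
  also have "\<dots> = R * (\<integral>\<omega>. w (Y \<omega>) \<partial>M)" by simp
  finally show ?thesis
    using integral_weight_of_ge wl_pos by (simp add: Xalpha_distr_eq field_simps)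
qed

lemma integral_weighted_deviation_eq_0:
  "(\<integral>\<omega>. w (Y \<omega>) * (Y \<omega> $ l - Xalpha \<alpha> F (distr M borel Y) $ l) \<partial>M) = 0"
proof -
  let ?m = "Xalpha \<alpha> F (distr M borel Y)"
  have int_comp: "integrable M (\<lambda>\<omega>. w (Y \<omega>) * Y \<omega> $ l)"
    using integrable_inner_left[OF integrable_weight_of(2), of "axis l 1"] by (simp add: inner_axis)
  have comp: "(\<integral>\<omega>. w (Y \<omega>) * Y \<omega> $ l \<partial>M) = (\<integral>\<omega>. w (Y \<omega>) *\<^sub>R Y \<omega> \<partial>M) $ l"
    using integral_inner_left[OF integrable_weight_of(2), of "axis l 1"] by (simp add: inner_axis)
  have "?m $ l * (\<integral>\<omega>. w (Y \<omega>) \<partial>M) = (\<integral>\<omega>. w (Y \<omega>) *\<^sub>R Y \<omega> \<partial>M) $ l"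
    using integral_weight_of_ge wl_pos by (simp add: Xalpha_distr_eq)
  moreover have "(\<integral>\<omega>. w (Y \<omega>) * (Y \<omega> $ l - ?m $ l) \<partial>M)
      = (\<integral>\<omega>. w (Y \<omega>) * Y \<omega> $ l \<partial>M) - ?m $ l * (\<integral>\<omega>. w (Y \<omega>) \<partial>M)"
    using int_comp integrable_weight_of(1) by (simp add: right_diff_distrib mult.commute)
  ultimately show ?thesis using comp by simp
qed

end

lemma norm_mf_consensus_le: "norm (mf_consensus k i) \<le> R"
  unfolding mf_consensus_def using AE_positions_in_D
  by (intro norm_Xalpha_distr_le borel_measurable_states) (auto elim: AE_mp)

definition pos_err :: "nat \<Rightarrow> nat \<Rightarrow> 'a \<Rightarrow> real" where
  "pos_err k i \<omega> = norm (fst (P k \<omega> i) - fst (Q k \<omega> i))"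

definition vel_err :: "nat \<Rightarrow> nat \<Rightarrow> 'a \<Rightarrow> real" where
  "vel_err k i \<omega> = norm (snd (P k \<omega> i) - snd (Q k \<omega> i))"

definition emp_consensus :: "nat \<Rightarrow> 'a \<Rightarrow> real^'d" where
  "emp_consensus k \<omega> = weighted_mean w N (\<lambda>j. fst (P k \<omega> j))"

definition emp_consensus_mf :: "nat \<Rightarrow> 'a \<Rightarrow> real^'d" where
  "emp_consensus_mf k \<omega> = weighted_mean w N (\<lambda>j. fst (Q k \<omega> j))"

definition drive_err :: "nat \<Rightarrow> nat \<Rightarrow> 'a \<Rightarrow> real" where
  "drive_err k i \<omega> = norm (cbo_W lam \<sigma> \<sigma>0 (emp_consensus k \<omega>) (fst (P k \<omega> i)) (\<xi> k i \<omega>)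
                           - cbo_W lam \<sigma> \<sigma>0 (mf_consensus k i) (fst (Q k \<omega> i)) (\<xi> k i \<omega>))"

definition input_err :: "nat \<Rightarrow> nat \<Rightarrow> 'a \<Rightarrow> real" where
  "input_err k i \<omega> = norm (emp_consensus k \<omega> - mf_consensus k i) + pos_err k i \<omega>"

lemma errs_nonneg: "pos_err k i \<omega> \<ge> 0" "vel_err k i \<omega> \<ge> 0" "drive_err k i \<omega> \<ge> 0" "input_err k i \<omega> \<ge> 0"
  by (simp_all add: pos_err_def vel_err_def drive_err_def input_err_def)

lemma errs_0: "pos_err 0 i \<omega> = 0" "vel_err 0 i \<omega> = 0"
  by (simp_all add: pos_err_def vel_err_def)

lemma vel_err_Suc:
  "vel_err (Suc k) i \<omega> = of_bool (Tb k i \<omega>) * vel_err k i \<omega> + (1 - of_bool (Tb k i \<omega>)) * drive_err k i \<omega>"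
  unfolding vel_err_def drive_err_def particles_Suc mf_copies_Suc cbo_update_snd emp_consensus_def by simp

lemma pos_err_Suc_le: "pos_err (Suc k) i \<omega> \<le> pos_err k i \<omega> + dt * vel_err (Suc k) i \<omega>"
proof -
  have "fst (P (Suc k) \<omega> i) = closest_point D (fst (P k \<omega> i) + dt *\<^sub>R snd (P (Suc k) \<omega> i))"
    "fst (Q (Suc k) \<omega> i) = closest_point D (fst (Q k \<omega> i) + dt *\<^sub>R snd (Q (Suc k) \<omega> i))"
    unfolding particles_Suc mf_copies_Suc cbo_update_fst cbo_update_snd by simp_all
  then have "pos_err (Suc k) i \<omega>
      \<le> dist (fst (P k \<omega> i) + dt *\<^sub>R snd (P (Suc k) \<omega> i)) (fst (Q k \<omega> i) + dt *\<^sub>R snd (Q (Suc k) \<omega> i))"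
    unfolding pos_err_def dist_norm[symmetric]
    by (simp only:) (rule closest_point_lipschitz[OF convex_D closed_D D_nonempty])
  also have "\<dots> = norm ((fst (P k \<omega> i) - fst (Q k \<omega> i)) + dt *\<^sub>R (snd (P (Suc k) \<omega> i) - snd (Q (Suc k) \<omega> i)))"
    by (simp add: dist_norm algebra_simps)
  also have "\<dots> \<le> pos_err k i \<omega> + norm (dt *\<^sub>R (snd (P (Suc k) \<omega> i) - snd (Q (Suc k) \<omega> i)))"
    unfolding pos_err_def by (rule norm_triangle_ineq)
  also have "\<dots> = pos_err k i \<omega> + dt * vel_err (Suc k) i \<omega>"
    using dt_nonneg by (simp add: vel_err_def)
  finally show ?thesis .
qed

lemma drive_err_le:
  "drive_err k i \<omega> \<le> (real CARD('d) * lam + \<sigma> * (\<Sum>l\<in>UNIV. \<bar>\<xi> k i \<omega> $ l\<bar>)) * input_err k i \<omega>"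
  unfolding drive_err_def input_err_def pos_err_def
  by (rule norm_cbo_W_diff_le[OF lam_nonneg sigma_nonneg])

lemma measurable_errs:
  "pos_err k i \<in> borel_measurable (inputs_sigma (history k))"
  "vel_err k i \<in> borel_measurable (inputs_sigma (history k))"
  "emp_consensus k \<in> borel_measurable (inputs_sigma (history k))"
  "input_err k i \<in> borel_measurable (inputs_sigma (history k))"
  "drive_err k i \<in> borel_measurable (inputs_sigma (history k \<union> range (Noise k i)))"
proof -
  note [measurable] = measurable_particles[THEN conjunct1] measurable_particles[THEN conjunct2]
    measurable_mf_copies_history
  show pos: "pos_err k i \<in> borel_measurable (inputs_sigma (history k))"
    unfolding pos_err_def[abs_def] by measurable
  show "vel_err k i \<in> borel_measurable (inputs_sigma (history k))"
    unfolding vel_err_def[abs_def] by measurable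
  show mean: "emp_consensus k \<in> borel_measurable (inputs_sigma (history k))"
    unfolding emp_consensus_def[abs_def] weighted_mean_def by measurable
  show "input_err k i \<in> borel_measurable (inputs_sigma (history k))"
    unfolding input_err_def[abs_def] using pos mean by measurable
  let ?S = "inputs_sigma (history k \<union> range (Noise k i))"
  have [measurable]: "emp_consensus k \<in> borel_measurable ?S"
    "(\<lambda>\<omega>. fst (P k \<omega> i)) \<in> borel_measurable ?S" "(\<lambda>\<omega>. fst (Q k \<omega> i)) \<in> borel_measurable ?S"
    using mean measurable_particles[THEN conjunct1] measurable_mf_copies_history(1)
    by (blast intro: measurable_inputs_sigma_mono[OF _ Un_upper1])+
  have [measurable]: "\<xi> k i \<in> borel_measurable ?S"
    by (rule measurable_noise_vec_inputs_sigma) simp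
  show "drive_err k i \<in> borel_measurable ?S"
    unfolding drive_err_def[abs_def] by measurable
qed

lemma bounds_in_D:
  assumes "\<forall>k i. fst (P k \<omega> i) \<in> D \<and> fst (Q k \<omega> i) \<in> D"
  shows "pos_err k i \<omega> \<le> 2 * R" "norm (emp_consensus k \<omega>) \<le> R" "norm (emp_consensus_mf k \<omega>) \<le> R"
    "input_err k i \<omega> \<le> 4 * R"
    "norm (emp_consensus k \<omega> - emp_consensus_mf k \<omega>)
       \<le> ((2 * R * Lw + wu) / wl) * ((1 / real N) * (\<Sum>j<N. pos_err k j \<omega>))"
proof -
  have w_pos: "\<And>z. z \<in> D \<Longrightarrow> w z > 0" using weight_bounds wl_pos by (meson less_le_trans)
  show pos: "pos_err k i \<omega> \<le> 2 * R"
    using assms norm_le_R norm_triangle_ineq4[of "fst (P k \<omega> i)" "fst (Q k \<omega> i)"]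
    unfolding pos_err_def by (smt (verit))
  show emp: "norm (emp_consensus k \<omega>) \<le> R"
    unfolding emp_consensus_def using assms w_pos norm_le_R N_pos by (intro norm_weighted_mean_le) auto
  show "norm (emp_consensus_mf k \<omega>) \<le> R"
    unfolding emp_consensus_mf_def using assms w_pos norm_le_R N_pos by (intro norm_weighted_mean_le) auto
  show "input_err k i \<omega> \<le> 4 * R"
    unfolding input_err_def
    using pos emp norm_mf_consensus_le[of k i] norm_triangle_ineq4[of "emp_consensus k \<omega>" "mf_consensus k i"]
    by linarith
  show "norm (emp_consensus k \<omega> - emp_consensus_mf k \<omega>)
      \<le> ((2 * R * Lw + wu) / wl) * ((1 / real N) * (\<Sum>j<N. pos_err k j \<omega>))"
    unfolding emp_consensus_def emp_consensus_mf_def pos_err_def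
    using assms
    by (intro weighted_mean_lipschitz[OF N_pos norm_le_R wl_pos weight_bounds weight_lipschitz]) auto
qed

lemma integrable_pos_err: "integrable M (pos_err k i)"
  by (rule integrable_const_bound[where B="2 * R"])
     (use AE_positions_in_D bounds_in_D(1) errs_nonneg measurable_errs(1)[THEN measurable_inputs_sigma_imp_M]
       in \<open>auto elim!: AE_mp\<close>)

lemma integrable_input_err: "integrable M (input_err k i)"
  by (rule integrable_const_bound[where B="4 * R"])
     (use AE_positions_in_D bounds_in_D(4) errs_nonneg measurable_errs(4)[THEN measurable_inputs_sigma_imp_M]
       in \<open>auto elim!: AE_mp\<close>)

lemma coin_facts:
  "(\<lambda>\<omega>. of_bool (Tb k i \<omega>) :: real) \<in> borel_measurable (inputs_sigma {Coin k i})"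
  "integrable M (\<lambda>\<omega>. of_bool (Tb k i \<omega>) :: real)"
  "(\<integral>\<omega>. of_bool (Tb k i \<omega>) \<partial>M) = (p :: real)"
proof -
  have "Tb k i \<in> inputs_sigma {Coin k i} \<rightarrow>\<^sub>M count_space UNIV"
    by (rule measurable_coin_inputs_sigma) simp
  then show meas: "(\<lambda>\<omega>. of_bool (Tb k i \<omega>) :: real) \<in> borel_measurable (inputs_sigma {Coin k i})"
    by measurable
  show "integrable M (\<lambda>\<omega>. of_bool (Tb k i \<omega>) :: real)"
    using meas[THEN measurable_inputs_sigma_imp_M] by (intro integrable_const_bound[where B=1]) auto
  have "(\<integral>\<omega>. of_bool (Tb k i \<omega>) \<partial>M) = (\<integral>b. (of_bool b :: real) \<partial>distr M (count_space UNIV) (Tb k i))"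
    by (rule integral_distr[OF measurable_coin, symmetric]) simp
  also have "\<dots> = p" unfolding coin_law using p_nonneg p_le_1 by (simp add: integral_bernoulli_pmf)
  finally show "(\<integral>\<omega>. of_bool (Tb k i \<omega>) \<partial>M) = p" .
qed

lemma noise_abs_facts:
  "(\<lambda>\<omega>. \<bar>\<xi> k i \<omega> $ l\<bar>) \<in> borel_measurable (inputs_sigma (range (Noise k i)))"
  "integrable M (\<lambda>\<omega>. \<bar>\<xi> k i \<omega> $ l\<bar>)"
  "(\<integral>\<omega>. \<bar>\<xi> k i \<omega> $ l\<bar> \<partial>M) \<le> 1"
proof -
  have "(\<lambda>\<omega>. \<xi> k i \<omega> $ l) \<in> borel_measurable (inputs_sigma (range (Noise k i)))"
    by (rule measurable_noise_inputs_sigma) simp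
  then show "(\<lambda>\<omega>. \<bar>\<xi> k i \<omega> $ l\<bar>) \<in> borel_measurable (inputs_sigma (range (Noise k i)))"
    by measurable
  have law: "distributed M lborel (\<lambda>\<omega>. \<xi> k i \<omega> $ l) (\<lambda>x. ennreal (std_normal_density x))"
    using noise_law by simp
  have "integrable lborel (\<lambda>x. std_normal_density x * \<bar>x\<bar>)"
    using integrable_std_normal_moment_abs[of 1] by simp
  then show "integrable M (\<lambda>\<omega>. \<bar>\<xi> k i \<omega> $ l\<bar>)"
    using distributed_integrable[OF law, of abs] by simp
  have "(\<integral>\<omega>. \<bar>\<xi> k i \<omega> $ l\<bar> \<partial>M) = (\<integral>x. std_normal_density x * \<bar>x\<bar> \<partial>lborel)"
    using distributed_integral[OF law, of abs] by simp
  also have "\<dots> = sqrt (2 / pi)"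
    using integral_std_normal_moment_abs_odd[of 0] by simp
  also have "\<dots> \<le> 1" using pi_gt3 by (simp add: real_sqrt_le_1_iff)
  finally show "(\<integral>\<omega>. \<bar>\<xi> k i \<omega> $ l\<bar> \<partial>M) \<le> 1" .
qed

text \<open>The random Lipschitz factor of the drive depends only on the fresh noise, which is
  independent of the current errors; so it contributes its mean, at most one per coordinate.\<close>

lemma expectation_drive_err_le:
  "integrable M (drive_err k i)"
  "(\<integral>\<omega>. drive_err k i \<omega> \<partial>M) \<le> real CARD('d) * (lam + \<sigma>) * (\<integral>\<omega>. input_err k i \<omega> \<partial>M)"
proof -
  have disj: "range (Noise k i) \<inter> history k = {}" by (auto simp: history_def)
  note indep = integral_mult_indep_inputs[OF disj noise_abs_facts(1) measurable_errs(4)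
      noise_abs_facts(2) integrable_input_err]
  define bound where "bound \<omega> = real CARD('d) * lam * input_err k i \<omega>
      + \<sigma> * (\<Sum>l\<in>UNIV. \<bar>\<xi> k i \<omega> $ l\<bar> * input_err k i \<omega>)" for \<omega>
  have int_bound: "integrable M bound"
    unfolding bound_def using integrable_input_err indep(1)
    by (intro Bochner_Integration.integrable_add Bochner_Integration.integrable_mult_right
        Bochner_Integration.integrable_sum) auto
  have drive_le_bound: "drive_err k i \<omega> \<le> bound \<omega>" for \<omega>
    using drive_err_le[of k i \<omega>] by (simp add: bound_def algebra_simps sum_distrib_right)
  show int_drive: "integrable M (drive_err k i)"
  proof (rule Bochner_Integration.integrable_bound[OF int_bound])
    show "drive_err k i \<in> borel_measurable M"
      using measurable_errs(5) by (rule measurable_inputs_sigma_imp_M)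
    show "AE \<omega> in M. norm (drive_err k i \<omega>) \<le> norm (bound \<omega>)"
    proof (rule AE_I2)
      fix \<omega>
      show "norm (drive_err k i \<omega>) \<le> norm (bound \<omega>)"
        using drive_le_bound[of \<omega>] errs_nonneg(3)[of k i \<omega>] abs_ge_self[of "bound \<omega>"] by simp
    qed
  qed
  have E_input_nonneg: "(\<integral>\<omega>. input_err k i \<omega> \<partial>M) \<ge> 0"
    using errs_nonneg by (intro integral_nonneg_AE) auto
  have "(\<integral>\<omega>. drive_err k i \<omega> \<partial>M) \<le> (\<integral>\<omega>. bound \<omega> \<partial>M)"
    by (intro integral_mono int_drive int_bound drive_le_bound)
  also have "\<dots> = real CARD('d) * lam * (\<integral>\<omega>. input_err k i \<omega> \<partial>M)
      + \<sigma> * (\<Sum>l\<in>UNIV. (\<integral>\<omega>. \<bar>\<xi> k i \<omega> $ l\<bar> * input_err k i \<omega> \<partial>M))"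
  proof -
    have "integrable M (\<lambda>\<omega>. real CARD('d) * lam * input_err k i \<omega>)"
      using integrable_input_err by simp
    moreover have "integrable M (\<lambda>\<omega>. \<sigma> * (\<Sum>l\<in>UNIV. \<bar>\<xi> k i \<omega> $ l\<bar> * input_err k i \<omega>))"
      using indep(1) by (intro Bochner_Integration.integrable_mult_right Bochner_Integration.integrable_sum)
    ultimately show ?thesis
      unfolding bound_def
      by (simp add: Bochner_Integration.integral_add Bochner_Integration.integral_sum[OF indep(1)])
  qed
  also have "\<dots> = real CARD('d) * lam * (\<integral>\<omega>. input_err k i \<omega> \<partial>M)
      + \<sigma> * (\<Sum>l\<in>UNIV. (\<integral>\<omega>. \<bar>\<xi> k i \<omega> $ l\<bar> \<partial>M) * (\<integral>\<omega>. input_err k i \<omega> \<partial>M))"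
    using indep(2) by simp
  also have "\<dots> \<le> real CARD('d) * lam * (\<integral>\<omega>. input_err k i \<omega> \<partial>M)
      + \<sigma> * (\<Sum>l\<in>(UNIV::'d set). (\<integral>\<omega>. input_err k i \<omega> \<partial>M))"
  proof -
    have "(\<Sum>l\<in>UNIV. (\<integral>\<omega>. \<bar>\<xi> k i \<omega> $ l\<bar> \<partial>M) * (\<integral>\<omega>. input_err k i \<omega> \<partial>M))
        \<le> (\<Sum>l\<in>(UNIV::'d set). (\<integral>\<omega>. input_err k i \<omega> \<partial>M))"
      by (intro sum_mono mult_left_le_one_le) (use noise_abs_facts(3) E_input_nonneg in auto)
    then show ?thesis using sigma_nonneg by (intro add_mono order_refl mult_left_mono) auto
  qed
  also have "\<dots> = real CARD('d) * (lam + \<sigma>) * (\<integral>\<omega>. input_err k i \<omega> \<partial>M)"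
    by (simp add: algebra_simps)
  finally show "(\<integral>\<omega>. drive_err k i \<omega> \<partial>M) \<le> real CARD('d) * (lam + \<sigma>) * (\<integral>\<omega>. input_err k i \<omega> \<partial>M)" .
qed

lemma integrable_vel_err: "integrable M (vel_err k i)"
proof (induction k)
  case (Suc k)
  note sum_integrable = Bochner_Integration.integrable_add[OF Suc.IH expectation_drive_err_le(1)]
  show ?case
  proof (rule Bochner_Integration.integrable_bound[OF sum_integrable])
    show "vel_err (Suc k) i \<in> borel_measurable M"
      using measurable_errs(2) by (rule measurable_inputs_sigma_imp_M)
    show "AE \<omega> in M. norm (vel_err (Suc k) i \<omega>) \<le> norm (vel_err k i \<omega> + drive_err k i \<omega>)"
      using errs_nonneg by (intro AE_I2) (auto simp: vel_err_Suc)
  qed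
qed (simp add: errs_0)

text \<open>The coin of step k is independent of everything the errors at step k depend on.\<close>

lemma expectation_vel_err_Suc:
  "(\<integral>\<omega>. vel_err (Suc k) i \<omega> \<partial>M)
     = p * (\<integral>\<omega>. vel_err k i \<omega> \<partial>M) + (1 - p) * (\<integral>\<omega>. drive_err k i \<omega> \<partial>M)"
proof -
  have disj: "{Coin k i} \<inter> history k = {}" "{Coin k i} \<inter> (history k \<union> range (Noise k i)) = {}"
    by (auto simp: history_def)
  note vel = integral_mult_indep_inputs[OF disj(1) coin_facts(1) measurable_errs(2) coin_facts(2)
      integrable_vel_err]
  note drive = integral_mult_indep_inputs[OF disj(2) coin_facts(1) measurable_errs(5) coin_facts(2)
      expectation_drive_err_le(1)]
  have "vel_err (Suc k) i = (\<lambda>\<omega>. of_bool (Tb k i \<omega>) * vel_err k i \<omega>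
      + (drive_err k i \<omega> - of_bool (Tb k i \<omega>) * drive_err k i \<omega>))"
    by (rule ext) (simp add: vel_err_Suc algebra_simps)
  then show ?thesis
    using vel drive expectation_drive_err_le(1) by (simp add: coin_facts(3) algebra_simps)
qed

lemma expectation_pos_err_Suc_le:
  "(\<integral>\<omega>. pos_err (Suc k) i \<omega> \<partial>M) \<le> (\<integral>\<omega>. pos_err k i \<omega> \<partial>M) + dt * (\<integral>\<omega>. vel_err (Suc k) i \<omega> \<partial>M)"
proof -
  have "(\<integral>\<omega>. pos_err (Suc k) i \<omega> \<partial>M) \<le> (\<integral>\<omega>. pos_err k i \<omega> + dt * vel_err (Suc k) i \<omega> \<partial>M)"
    by (intro integral_mono integrable_pos_err Bochner_Integration.integrable_add
        Bochner_Integration.integrable_mult_right integrable_vel_err pos_err_Suc_le)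
  also have "\<dots> = (\<integral>\<omega>. pos_err k i \<omega> \<partial>M) + dt * (\<integral>\<omega>. vel_err (Suc k) i \<omega> \<partial>M)"
    using integrable_pos_err integrable_vel_err by simp
  finally show ?thesis .
qed

lemma integrable_emp_consensus_mf_err: "integrable M (\<lambda>\<omega>. norm (emp_consensus_mf k \<omega> - mf_consensus k i))"
proof (rule integrable_const_bound[where B="2 * R"])
  show "AE \<omega> in M. norm (norm (emp_consensus_mf k \<omega> - mf_consensus k i)) \<le> 2 * R"
    using AE_positions_in_D
  proof eventually_elim
    case (elim \<omega>)
    then show ?case
      using bounds_in_D(3)[OF elim, of k] norm_mf_consensus_le[of k i]
        norm_triangle_ineq4[of "emp_consensus_mf k \<omega>" "mf_consensus k i"] by simp
  qed
  have "emp_consensus_mf k \<in> borel_measurable M"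
    unfolding emp_consensus_mf_def[abs_def] weighted_mean_def using borel_measurable_states(3) by measurable
  then show "(\<lambda>\<omega>. norm (emp_consensus_mf k \<omega> - mf_consensus k i)) \<in> borel_measurable M" by measurable
qed

lemma expectation_input_err_le:
  "(\<integral>\<omega>. input_err k i \<omega> \<partial>M)
     \<le> ((2 * R * Lw + wu) / wl) * ((1 / real N) * (\<Sum>j<N. (\<integral>\<omega>. pos_err k j \<omega> \<partial>M)))
       + (\<integral>\<omega>. norm (emp_consensus_mf k \<omega> - mf_consensus k i) \<partial>M) + (\<integral>\<omega>. pos_err k i \<omega> \<partial>M)"
proof -
  let ?L = "(2 * R * Lw + wu) / wl"
  let ?g = "\<lambda>\<omega>. ?L * ((1 / real N) * (\<Sum>j<N. pos_err k j \<omega>))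
      + norm (emp_consensus_mf k \<omega> - mf_consensus k i) + pos_err k i \<omega>"
  have int_g: "integrable M ?g"
    using integrable_pos_err integrable_emp_consensus_mf_err
    by (intro Bochner_Integration.integrable_add Bochner_Integration.integrable_mult_right
        Bochner_Integration.integrable_sum) auto
  have "(\<integral>\<omega>. input_err k i \<omega> \<partial>M) \<le> (\<integral>\<omega>. ?g \<omega> \<partial>M)"
  proof (rule integral_mono_AE[OF integrable_input_err int_g])
    show "AE \<omega> in M. input_err k i \<omega> \<le> ?g \<omega>"
      using AE_positions_in_D
    proof eventually_elim
      case (elim \<omega>)
      then show ?case
        using bounds_in_D(5)[OF elim, of k]
          norm_triangle_ineq[of "emp_consensus k \<omega> - emp_consensus_mf k \<omega>" "emp_consensus_mf k \<omega> - mf_consensus k i"]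
        unfolding input_err_def by simp
    qed
  qed
  also have "\<dots> = ?L * ((1 / real N) * (\<Sum>j<N. (\<integral>\<omega>. pos_err k j \<omega> \<partial>M)))
      + (\<integral>\<omega>. norm (emp_consensus_mf k \<omega> - mf_consensus k i) \<partial>M) + (\<integral>\<omega>. pos_err k i \<omega> \<partial>M)"
    using integrable_pos_err integrable_emp_consensus_mf_err
    by (simp add: Bochner_Integration.integral_add Bochner_Integration.integrable_sum
        Bochner_Integration.integral_sum Bochner_Integration.integrable_mult_right)
  finally show ?thesis .
qed

subsection \<open>The mean-field copies are identically distributed\<close>

definition std_normal_vec :: "(real^'d) measure" where
  "std_normal_vec = distr (\<Pi>\<^sub>M l\<in>UNIV. density lborel (\<lambda>x. ennreal (std_normal_density x))) borel (\<lambda>f. \<chi> l. f l)"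

abbreviation "step_inputs_space \<equiv> (count_space UNIV :: bool measure) \<Otimes>\<^sub>M (borel :: (real^'d) measure)"

lemma distr_step_inputs:
  "distr M step_inputs_space (\<lambda>\<omega>. (Tb k i \<omega>, \<xi> k i \<omega>)) = measure_pmf (bernoulli_pmf p) \<Otimes>\<^sub>M std_normal_vec"
proof -
  have coin: "Tb k i \<in> inputs_sigma {Coin k i} \<rightarrow>\<^sub>M count_space UNIV"
    by (rule measurable_coin_inputs_sigma) simp
  have noise: "\<xi> k i \<in> inputs_sigma (range (Noise k i)) \<rightarrow>\<^sub>M borel"
    by (rule measurable_noise_vec_inputs_sigma) simp
  have "distr M borel (\<lambda>\<omega>. \<xi> k i \<omega> $ l) = density lborel (\<lambda>x. ennreal (std_normal_density x))" for l
  proof -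
    have "distr M borel (\<lambda>\<omega>. \<xi> k i \<omega> $ l) = distr M lborel (\<lambda>\<omega>. \<xi> k i \<omega> $ l)" by (rule distr_cong) auto
    then show ?thesis using distributed_distr_eq_density[OF noise_law[of k i l]] by simp
  qed
  then have "distr M borel (\<xi> k i) = std_normal_vec" by (simp add: distr_noise_vec std_normal_vec_def)
  moreover have "distr M step_inputs_space (\<lambda>\<omega>. (Tb k i \<omega>, \<xi> k i \<omega>))
      = distr M (count_space UNIV) (Tb k i) \<Otimes>\<^sub>M distr M borel (\<xi> k i)"
    by (rule distr_pair_indep_inputs[OF _ coin noise]) auto
  ultimately show ?thesis using coin_law by simp
qed

lemma measurable_mf_copies_pair:
  "(\<lambda>\<omega>. Q k \<omega> i) \<in> inputs_sigma (own_history i k) \<rightarrow>\<^sub>M (borel :: ((real^'d) \<times> (real^'d)) measure)"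
proof -
  have "(\<lambda>\<omega>. Q k \<omega> i) \<in> inputs_sigma (own_history i k) \<rightarrow>\<^sub>M (borel \<Otimes>\<^sub>M borel)"
    using measurable_mf_copies[of k i] by (simp add: measurable_pair_iff o_def)
  then show ?thesis by (simp add: borel_prod)
qed

definition update_map :: "real^'d \<Rightarrow> ((real^'d) \<times> (real^'d)) \<times> bool \<times> (real^'d) \<Rightarrow> (real^'d) \<times> (real^'d)" where
  "update_map m = (\<lambda>(s, t, z). cbo_update D dt lam \<sigma> \<sigma>0 m t z (fst s, snd s))"

lemma measurable_update_map: "update_map m \<in> (borel \<Otimes>\<^sub>M step_inputs_space) \<rightarrow>\<^sub>M borel"
proof -
  let ?N = "(borel :: ((real^'d) \<times> (real^'d)) measure) \<Otimes>\<^sub>M step_inputs_space"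
  have fst_borel: "fst \<in> (borel :: ((real^'d) \<times> (real^'d)) measure) \<rightarrow>\<^sub>M borel"
    and snd_borel: "snd \<in> (borel :: ((real^'d) \<times> (real^'d)) measure) \<rightarrow>\<^sub>M borel"
    using measurable_fst[of "borel :: (real^'d) measure" "borel :: (real^'d) measure"]
      measurable_snd[of "borel :: (real^'d) measure" "borel :: (real^'d) measure"]
    by (simp_all add: borel_prod)
  have coin: "(\<lambda>x. fst (snd x)) \<in> ?N \<rightarrow>\<^sub>M count_space UNIV" and noise: "(\<lambda>x. snd (snd x)) \<in> borel_measurable ?N"
    by measurable
  have pos: "(\<lambda>x. fst (fst x)) \<in> borel_measurable ?N" and vel: "(\<lambda>x. snd (fst x)) \<in> borel_measurable ?N"
    using fst_borel snd_borel by measurable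
  note update = measurable_cbo_update[OF convex_D closed_D D_nonempty measurable_const coin noise pos vel]
  have "update_map m \<in> ?N \<rightarrow>\<^sub>M (borel \<Otimes>\<^sub>M borel)"
    unfolding measurable_pair_iff update_map_def using update by (simp add: o_def case_prod_beta)
  then show ?thesis by (simp add: borel_prod)
qed

lemma mf_consensus_eq_law:
  "mf_consensus k i = Xalpha \<alpha> F (distr (distr M borel (\<lambda>\<omega>. Q k \<omega> i)) borel fst)"
proof -
  have "fst \<in> (borel :: ((real^'d) \<times> (real^'d)) measure) \<rightarrow>\<^sub>M (borel :: (real^'d) measure)"
    using measurable_fst[of "borel :: (real^'d) measure" "borel :: (real^'d) measure"] by (simp add: borel_prod)
  from distr_distr[OF this measurable_inputs_sigma_imp_M[OF measurable_mf_copies_pair]]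
  show ?thesis by (simp add: mf_consensus_def comp_def)
qed

text \<open>Each copy is driven by its own initial datum, coins and noises with a common law, and
  by the deterministic consensus point, which itself only depends on the law of the copy.\<close>

lemma distr_mf_copies_eq: "distr M borel (\<lambda>\<omega>. Q k \<omega> i) = distr M borel (\<lambda>\<omega>. Q k \<omega> 0)"
proof (induction k arbitrary: i)
  case 0
  show ?case using init_law[of i] by simp
next
  case (Suc k)
  have step: "distr M borel (\<lambda>\<omega>. Q (Suc k) \<omega> j) =
      distr (distr M borel (\<lambda>\<omega>. Q k \<omega> j) \<Otimes>\<^sub>M (measure_pmf (bernoulli_pmf p) \<Otimes>\<^sub>M std_normal_vec))
        borel (update_map (mf_consensus k j))" for j
  proof -
    have disj: "own_history j k \<inter> insert (Coin k j) (range (Noise k j)) = {}"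
      by (auto simp: own_history_def)
    have inputs: "(\<lambda>\<omega>. (Tb k j \<omega>, \<xi> k j \<omega>))
        \<in> inputs_sigma (insert (Coin k j) (range (Noise k j))) \<rightarrow>\<^sub>M step_inputs_space"
      by (intro measurable_Pair measurable_coin_inputs_sigma measurable_noise_vec_inputs_sigma) auto
    have joint: "distr M (borel \<Otimes>\<^sub>M step_inputs_space) (\<lambda>\<omega>. (Q k \<omega> j, (Tb k j \<omega>, \<xi> k j \<omega>))) =
        distr M borel (\<lambda>\<omega>. Q k \<omega> j) \<Otimes>\<^sub>M (measure_pmf (bernoulli_pmf p) \<Otimes>\<^sub>M std_normal_vec)"
      using distr_pair_indep_inputs[OF disj measurable_mf_copies_pair inputs] distr_step_inputs by simp
    have "(\<lambda>\<omega>. (Q k \<omega> j, (Tb k j \<omega>, \<xi> k j \<omega>))) \<in> M \<rightarrow>\<^sub>M (borel \<Otimes>\<^sub>M step_inputs_space)"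
      using measurable_inputs_sigma_imp_M[OF measurable_mf_copies_pair] measurable_inputs_sigma_imp_M[OF inputs]
      by (rule measurable_Pair)
    from distr_distr[OF measurable_update_map this]
    have "distr M borel (\<lambda>\<omega>. update_map (mf_consensus k j) (Q k \<omega> j, (Tb k j \<omega>, \<xi> k j \<omega>))) =
        distr (distr M (borel \<Otimes>\<^sub>M step_inputs_space) (\<lambda>\<omega>. (Q k \<omega> j, (Tb k j \<omega>, \<xi> k j \<omega>)))) borel
          (update_map (mf_consensus k j))"
      by (simp add: comp_def)
    moreover have "update_map (mf_consensus k j) (Q k \<omega> j, (Tb k j \<omega>, \<xi> k j \<omega>)) = Q (Suc k) \<omega> j" for \<omega>
      unfolding mf_copies_Suc update_map_def by simp
    ultimately show ?thesis unfolding joint by simp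
  qed
  have "mf_consensus k i = mf_consensus k 0" unfolding mf_consensus_eq_law Suc.IH[of i] ..
  then show ?case unfolding step Suc.IH[of i] by simp
qed

lemma mf_consensus_eq: "mf_consensus k i = mf_consensus k 0"
  unfolding mf_consensus_eq_law distr_mf_copies_eq[of k i] ..

subsection \<open>Law of large numbers for the consensus point\<close>

definition mf_deviation :: "nat \<Rightarrow> nat \<Rightarrow> 'd \<Rightarrow> 'a \<Rightarrow> real" where
  "mf_deviation k j l \<omega> = w (fst (Q k \<omega> j)) * (fst (Q k \<omega> j) $ l - mf_consensus k 0 $ l)"

lemma measurable_mf_deviation: "mf_deviation k j l \<in> borel_measurable (inputs_sigma (own_history j k))"
proof -
  note [measurable] = measurable_mf_copies[THEN conjunct1]
  show ?thesis unfolding mf_deviation_def[abs_def] by measurable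
qed

lemma abs_mf_deviation_le:
  assumes "fst (Q k \<omega> j) \<in> D"
  shows "\<bar>mf_deviation k j l \<omega>\<bar> \<le> 2 * R * wu"
proof -
  have "\<bar>fst (Q k \<omega> j) $ l - mf_consensus k 0 $ l\<bar> \<le> norm (fst (Q k \<omega> j) - mf_consensus k 0)"
    using component_le_norm_cart[of "fst (Q k \<omega> j) - mf_consensus k 0" l] by simp
  also have "\<dots> \<le> 2 * R"
    using norm_triangle_ineq4[of "fst (Q k \<omega> j)" "mf_consensus k 0"] norm_le_R[OF assms]
      norm_mf_consensus_le[of k 0] by simp
  finally have "\<bar>fst (Q k \<omega> j) $ l - mf_consensus k 0 $ l\<bar> \<le> 2 * R" .
  moreover have "0 \<le> w (fst (Q k \<omega> j))" "w (fst (Q k \<omega> j)) \<le> wu"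
    using weight_bounds[OF assms] wl_pos by auto
  ultimately show ?thesis
    unfolding mf_deviation_def abs_mult using mult_mono[of _ wu _ "2 * R"] by (simp add: mult_ac)
qed

lemma AE_abs_mf_deviation_le: "AE \<omega> in M. \<bar>mf_deviation k j l \<omega>\<bar> \<le> 2 * R * wu"
  using AE_positions_in_D by eventually_elim (simp add: abs_mf_deviation_le)

lemma integrable_mf_deviation: "integrable M (mf_deviation k j l)"
  using AE_abs_mf_deviation_le measurable_inputs_sigma_imp_M[OF measurable_mf_deviation]
  by (intro integrable_const_bound[where B="2 * R * wu"]) auto

lemma integral_mf_deviation: "(\<integral>\<omega>. mf_deviation k j l \<omega> \<partial>M) = 0"
proof -
  have "AE \<omega> in M. fst (Q k \<omega> j) \<in> D" using AE_positions_in_D by eventually_elim simp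
  from integral_weighted_deviation_eq_0[OF borel_measurable_states(3) this, of l]
  show ?thesis using mf_consensus_eq[of k j] by (simp add: mf_deviation_def mf_consensus_def)
qed

lemma integral_mf_deviation_mult:
  "j \<noteq> j' \<Longrightarrow> (\<integral>\<omega>. mf_deviation k j l \<omega> * mf_deviation k j' l \<omega> \<partial>M) = 0"
  using integral_mult_indep_inputs(2)[OF own_history_disjoint measurable_mf_deviation measurable_mf_deviation
      integrable_mf_deviation integrable_mf_deviation]
  by (simp add: integral_mf_deviation)

lemma norm_emp_consensus_mf_err_le:
  assumes "\<forall>k i. fst (P k \<omega> i) \<in> D \<and> fst (Q k \<omega> i) \<in> D"
  shows "norm (emp_consensus_mf k \<omega> - mf_consensus k i)
    \<le> (1 / (real N * wl)) * (\<Sum>l\<in>UNIV. \<bar>\<Sum>j<N. mf_deviation k j l \<omega>\<bar>)"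
proof -
  define S where "S = (\<Sum>j<N. w (fst (Q k \<omega> j)))"
  define V where "V = (\<Sum>j<N. w (fst (Q k \<omega> j)) *\<^sub>R (fst (Q k \<omega> j) - mf_consensus k 0))"
  have "(\<Sum>j<N. wl) \<le> S" unfolding S_def using weight_bounds assms by (intro sum_mono) auto
  then have S_ge: "real N * wl \<le> S" by simp
  have Nwl_pos: "real N * wl > 0" using N_pos wl_pos by simp
  have "emp_consensus_mf k \<omega> - mf_consensus k i = (1 / S) *\<^sub>R V"
    unfolding emp_consensus_mf_def mf_consensus_eq[of k i] S_def V_def
    using S_ge Nwl_pos by (intro weighted_mean_minus) (simp add: S_def)
  moreover have "V $ l = (\<Sum>j<N. mf_deviation k j l \<omega>)" for l
    by (simp add: V_def mf_deviation_def)
  ultimately have "norm (emp_consensus_mf k \<omega> - mf_consensus k i)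
      \<le> (1 / S) * (\<Sum>l\<in>UNIV. \<bar>\<Sum>j<N. mf_deviation k j l \<omega>\<bar>)"
    using S_ge Nwl_pos norm_le_l1_cart[of V] by (simp add: divide_right_mono)
  also have "\<dots> \<le> (1 / (real N * wl)) * (\<Sum>l\<in>UNIV. \<bar>\<Sum>j<N. mf_deviation k j l \<omega>\<bar>)"
    using S_ge Nwl_pos by (intro mult_right_mono divide_left_mono sum_nonneg) auto
  finally show ?thesis .
qed

lemma expectation_emp_consensus_mf_err_le:
  "(\<integral>\<omega>. norm (emp_consensus_mf k \<omega> - mf_consensus k i) \<partial>M)
     \<le> (2 * R * wu * real CARD('d) / wl) / sqrt (real N)"
proof -
  have int_sum: "integrable M (\<lambda>\<omega>. \<bar>\<Sum>j<N. mf_deviation k j l \<omega>\<bar>)" for l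
    by (intro integrable_abs Bochner_Integration.integrable_sum integrable_mf_deviation)
  have "(\<integral>\<omega>. norm (emp_consensus_mf k \<omega> - mf_consensus k i) \<partial>M)
      \<le> (\<integral>\<omega>. (1 / (real N * wl)) * (\<Sum>l\<in>UNIV. \<bar>\<Sum>j<N. mf_deviation k j l \<omega>\<bar>) \<partial>M)"
  proof (rule integral_mono_AE)
    show "AE \<omega> in M. norm (emp_consensus_mf k \<omega> - mf_consensus k i)
        \<le> (1 / (real N * wl)) * (\<Sum>l\<in>UNIV. \<bar>\<Sum>j<N. mf_deviation k j l \<omega>\<bar>)"
      using AE_positions_in_D by eventually_elim (rule norm_emp_consensus_mf_err_le)
  qed (use integrable_emp_consensus_mf_err int_sum in auto)
  also have "\<dots> = (1 / (real N * wl)) * (\<Sum>l\<in>UNIV. (\<integral>\<omega>. \<bar>\<Sum>j<N. mf_deviation k j l \<omega>\<bar> \<partial>M))"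
    using int_sum by (simp add: Bochner_Integration.integral_sum)
  also have "\<dots> \<le> (1 / (real N * wl)) * (\<Sum>l\<in>(UNIV::'d set). 2 * R * wu * sqrt (real N))"
  proof (intro mult_left_mono sum_mono)
    fix l :: 'd
    show "(\<integral>\<omega>. \<bar>\<Sum>j<N. mf_deviation k j l \<omega>\<bar> \<partial>M) \<le> 2 * R * wu * sqrt (real N)"
      using measurable_inputs_sigma_imp_M[OF measurable_mf_deviation] AE_abs_mf_deviation_le
        integral_mf_deviation_mult R_nonneg wu_nonneg
      by (intro expectation_abs_sum_orthogonal_le) auto
  qed (use wl_pos in simp)
  also have "\<dots> = (2 * R * wu * real CARD('d) / wl) / sqrt (real N)"
  proof -
    have "sqrt (real N) * sqrt (real N) = real N" by simp
    moreover have "sqrt (real N) > 0" using N_pos by simp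
    ultimately show ?thesis using wl_pos by (simp add: field_simps)
  qed
  finally show ?thesis .
qed

definition mean_pos_err :: "nat \<Rightarrow> real" where
  "mean_pos_err k = (1 / real N) * (\<Sum>i<N. (\<integral>\<omega>. pos_err k i \<omega> \<partial>M))"

definition mean_vel_err :: "nat \<Rightarrow> real" where
  "mean_vel_err k = (1 / real N) * (\<Sum>i<N. (\<integral>\<omega>. vel_err k i \<omega> \<partial>M))"

lemma rate_nonneg: "coupling_rate CARD('d) lam \<sigma> R wl wu Lw \<ge> 0"
  using lam_nonneg sigma_nonneg R_nonneg wl_pos wu_nonneg lipschitz_on_nonneg[OF weight_lipschitz]
  by (rule coupling_rate_nonneg)

lemma mean_pos_err_nonneg: "mean_pos_err k \<ge> 0"
  unfolding mean_pos_err_def using errs_nonneg by (intro mult_nonneg_nonneg sum_nonneg integral_nonneg_AE) auto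

lemma mean_drive_err_le:
  "(1 / real N) * (\<Sum>i<N. (\<integral>\<omega>. drive_err k i \<omega> \<partial>M))
     \<le> coupling_rate CARD('d) lam \<sigma> R wl wu Lw * (mean_pos_err k + 1 / sqrt (real N))"
proof -
  define Lm where "Lm = (2 * R * Lw + wu) / wl"
  define Cn where "Cn = 2 * R * wu * real CARD('d) / wl"
  define c where "c = real CARD('d) * (lam + \<sigma>)"
  define a where "a = mean_pos_err k"
  define e where "e = 1 / sqrt (real N)"
  have c_nonneg: "c \<ge> 0" unfolding c_def using lam_nonneg sigma_nonneg by simp
  have "(\<integral>\<omega>. drive_err k i \<omega> \<partial>M) \<le> c * (Lm * a + Cn * e + (\<integral>\<omega>. pos_err k i \<omega> \<partial>M))" for i
  proof -
    have "(\<integral>\<omega>. input_err k i \<omega> \<partial>M) \<le> Lm * a + Cn * e + (\<integral>\<omega>. pos_err k i \<omega> \<partial>M)"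
      using expectation_input_err_le[of k i] expectation_emp_consensus_mf_err_le[of k i]
      unfolding Lm_def Cn_def a_def e_def mean_pos_err_def by simp
    from mult_left_mono[OF this c_nonneg] show ?thesis
      using expectation_drive_err_le(2)[of k i] unfolding c_def by linarith
  qed
  then have "(1 / real N) * (\<Sum>i<N. (\<integral>\<omega>. drive_err k i \<omega> \<partial>M))
      \<le> (1 / real N) * (\<Sum>i<N. c * (Lm * a + Cn * e + (\<integral>\<omega>. pos_err k i \<omega> \<partial>M)))"
    by (intro mult_left_mono sum_mono) auto
  also have "\<dots> = c * (Lm * a + Cn * e + a)"
    using N_pos unfolding a_def mean_pos_err_def by (simp add: sum.distrib sum_distrib_left field_simps)
  also have "\<dots> \<le> c * ((Lm + 1 + Cn) * (a + e))"
  proof (rule mult_left_mono[OF _ c_nonneg])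
    have "Lm \<ge> 0" "Cn \<ge> 0" "a \<ge> 0" "e \<ge> 0"
      unfolding Lm_def Cn_def a_def e_def
      using R_nonneg wu_nonneg wl_pos lipschitz_on_nonneg[OF weight_lipschitz] mean_pos_err_nonneg by auto
    then have "Cn * a + Lm * e + e \<ge> 0" by simp
    moreover have "(Lm + 1 + Cn) * (a + e) = Lm * a + Cn * e + a + (Cn * a + Lm * e + e)"
      by (simp add: algebra_simps)
    ultimately show "Lm * a + Cn * e + a \<le> (Lm + 1 + Cn) * (a + e)" by linarith
  qed
  also have "\<dots> = coupling_rate CARD('d) lam \<sigma> R wl wu Lw * (mean_pos_err k + 1 / sqrt (real N))"
    unfolding coupling_rate_def Lm_def Cn_def c_def a_def e_def by simp
  finally show ?thesis .
qed

lemma mean_vel_err_Suc_le: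
  "mean_vel_err (Suc k) \<le> p * mean_vel_err k
     + (1 - p) * (coupling_rate CARD('d) lam \<sigma> R wl wu Lw * (mean_pos_err k + 1 / sqrt (real N)))"
proof -
  have "mean_vel_err (Suc k)
      = p * mean_vel_err k + (1 - p) * ((1 / real N) * (\<Sum>i<N. (\<integral>\<omega>. drive_err k i \<omega> \<partial>M)))"
  proof -
    have "(\<Sum>i<N. p * (\<integral>\<omega>. vel_err k i \<omega> \<partial>M) + (1 - p) * (\<integral>\<omega>. drive_err k i \<omega> \<partial>M))
        = p * (\<Sum>i<N. (\<integral>\<omega>. vel_err k i \<omega> \<partial>M)) + (1 - p) * (\<Sum>i<N. (\<integral>\<omega>. drive_err k i \<omega> \<partial>M))"
      by (simp add: sum.distrib sum_distrib_left)
    then show ?thesis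
      unfolding mean_vel_err_def expectation_vel_err_Suc using N_pos by (simp add: field_simps)
  qed
  moreover have "(1 - p) * ((1 / real N) * (\<Sum>i<N. (\<integral>\<omega>. drive_err k i \<omega> \<partial>M)))
      \<le> (1 - p) * (coupling_rate CARD('d) lam \<sigma> R wl wu Lw * (mean_pos_err k + 1 / sqrt (real N)))"
    using mean_drive_err_le[of k] p_le_1 by (intro mult_left_mono) auto
  ultimately show ?thesis by linarith
qed

lemma mean_pos_err_Suc_le: "mean_pos_err (Suc k) \<le> mean_pos_err k + dt * mean_vel_err (Suc k)"
proof -
  have "mean_pos_err (Suc k)
      \<le> (1 / real N) * (\<Sum>i<N. (\<integral>\<omega>. pos_err k i \<omega> \<partial>M) + dt * (\<integral>\<omega>. vel_err (Suc k) i \<omega> \<partial>M))"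
    unfolding mean_pos_err_def by (intro mult_left_mono sum_mono expectation_pos_err_Suc_le) auto
  also have "\<dots> = mean_pos_err k + dt * mean_vel_err (Suc k)"
    unfolding mean_pos_err_def mean_vel_err_def by (simp add: sum.distrib sum_distrib_left algebra_simps)
  finally show ?thesis .
qed

theorem expected_error_bound:
  fixes k :: nat
  defines "err \<equiv> \<lambda>\<omega>. (1 / real N) * (\<Sum>i<N. norm (fst (P k \<omega> i) - fst (Q k \<omega> i))
                                           + norm (snd (P k \<omega> i) - snd (Q k \<omega> i)))"
  shows "integrable M err" and "(\<integral>\<omega>. err \<omega> \<partial>M) \<le> (1 + coupling_rate CARD('d) lam \<sigma> R wl wu Lw)
      * exp (coupling_rate CARD('d) lam \<sigma> R wl wu Lw * (real k * dt)) / sqrt (real N)"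
proof -
  have err_eq: "err = (\<lambda>\<omega>. (1 / real N) * (\<Sum>i<N. pos_err k i \<omega> + vel_err k i \<omega>))"
    unfolding err_def pos_err_def vel_err_def ..
  show "integrable M err"
    unfolding err_eq using integrable_pos_err integrable_vel_err by auto
  have "(\<integral>\<omega>. err \<omega> \<partial>M) = mean_pos_err k + mean_vel_err k"
    unfolding err_eq mean_pos_err_def mean_vel_err_def using integrable_pos_err integrable_vel_err
    by (simp add: Bochner_Integration.integral_sum Bochner_Integration.integral_add sum.distrib algebra_simps)
  also have "\<dots> \<le> (1 + coupling_rate CARD('d) lam \<sigma> R wl wu Lw)
      * exp (coupling_rate CARD('d) lam \<sigma> R wl wu Lw * (real k * dt)) * (1 / sqrt (real N))"
    using rate_nonneg dt_nonneg p_nonneg p_le_1 mean_pos_err_Suc_le mean_vel_err_Suc_le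
    by (intro coupled_recursion_bound) (simp_all add: mean_pos_err_def mean_vel_err_def errs_0)
  finally show "(\<integral>\<omega>. err \<omega> \<partial>M) \<le> (1 + coupling_rate CARD('d) lam \<sigma> R wl wu Lw)
      * exp (coupling_rate CARD('d) lam \<sigma> R wl wu Lw * (real k * dt)) / sqrt (real N)" by simp
qed

end

lemma cbo_coupling_if_setting:
  fixes M :: "'a measure" and D :: "(real^'d) set"
  assumes setting: "cbo_setting M D dt \<nu> f0 X0 V0 Tb \<xi>"
    and "compact D" "convex D" "continuous_on UNIV F"
    and "\<And>z. z \<in> D \<Longrightarrow> norm z \<le> R" "wl > 0"
    and "\<And>z. z \<in> D \<Longrightarrow> wl \<le> cbo_weight \<alpha> F z \<and> cbo_weight \<alpha> F z \<le> wu"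
    and "Lw-lipschitz_on D (cbo_weight \<alpha> F)"
    and "N \<ge> 1" "lam \<ge> 0" "\<sigma> \<ge> 0" "dt \<ge> 0" "\<nu> \<ge> 0"
  shows "cbo_coupling M X0 V0 Tb \<xi> D F \<alpha> lam \<sigma> dt (exp (- \<nu> * dt)) N R wl wu Lw"
proof -
  from setting have prob_M: "prob_space M" and prob_f0: "prob_space f0" and sets_f0: "sets f0 = sets borel"
    and f0_D: "emeasure f0 (D \<times> UNIV) = 1"
    and init: "\<And>i. (\<lambda>\<omega>. (X0 i \<omega>, V0 i \<omega>)) \<in> M \<rightarrow>\<^sub>M borel \<and> distr M borel (\<lambda>\<omega>. (X0 i \<omega>, V0 i \<omega>)) = f0"
    and coin: "\<And>k i. Tb k i \<in> M \<rightarrow>\<^sub>M count_space UNIV \<and>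
          distr M (count_space UNIV) (Tb k i) = measure_pmf (bernoulli_pmf (exp (- \<nu> * dt)))"
    and noise: "\<And>k i l. distributed M lborel (\<lambda>\<omega>. \<xi> k i \<omega> $ l) std_normal_density"
    and indep: "prob_space.indep_sets M (cbo_sigmas M X0 V0 Tb \<xi>) UNIV"
    unfolding cbo_setting_def by auto
  interpret prob_space M by (rule prob_M)
  have inputs: "cbo_inputs M X0 V0 Tb \<xi>"
    using init coin noise[THEN distributed_measurable] indep
    by unfold_locales (auto simp: measurable_lborel1)
  have "D \<noteq> {}" using f0_D by auto
  have init_in_D: "AE \<omega> in M. \<forall>i. X0 i \<omega> \<in> D"
  proof (subst AE_all_countable, intro allI)
    fix i
    interpret f0: prob_space f0 by (rule prob_f0)
    have "closed (D \<times> (UNIV :: (real^'d) set))"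
      using compact_imp_closed[OF \<open>compact D\<close>] by (intro closed_Times) auto
    then have "D \<times> UNIV \<in> sets f0" unfolding sets_f0 by (rule borel_closed)
    then have AE_f0: "AE x in f0. x \<in> D \<times> UNIV"
      using f0.AE_I_eq_1[of "\<lambda>x. x \<in> D \<times> UNIV"] f0_D sets_eq_imp_space_eq[OF sets_f0] by simp
    have law: "distr M borel (\<lambda>\<omega>. (X0 i \<omega>, V0 i \<omega>)) = f0" using init by blast
    have "AE x in distr M borel (\<lambda>\<omega>. (X0 i \<omega>, V0 i \<omega>)). x \<in> D \<times> UNIV"
      unfolding law by (fact AE_f0)
    from AE_distrD[OF init[THEN conjunct1] this] show "AE \<omega> in M. X0 i \<omega> \<in> D" by simp
  qed
  show ?thesis
    using inputs assms init_in_D \<open>D \<noteq> {}\<close> init coin noise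
    by (intro cbo_coupling.intro cbo_coupling_axioms.intro) auto
qed

lemma cbo_weight_constants:
  fixes F :: "real^'d \<Rightarrow> real" and D :: "(real^'d) set"
  assumes "\<alpha> \<ge> 0" "compact D" "L \<ge> 0"
    and F_growth: "\<And>x y. \<bar>F x - F y\<bar> \<le> L * (1 + norm x + norm y) * norm (x - y)"
  obtains R wl wu Lw where "\<And>z. z \<in> D \<Longrightarrow> norm z \<le> R" "R \<ge> 0" "wl > 0" "wu > 0"
    "\<And>z. z \<in> D \<Longrightarrow> wl \<le> cbo_weight \<alpha> F z \<and> cbo_weight \<alpha> F z \<le> wu"
    "Lw-lipschitz_on D (cbo_weight \<alpha> F)"
proof -
  obtain R where R: "R > 0" "\<And>z. z \<in> D \<Longrightarrow> norm z \<le> R"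
    using compact_imp_bounded[OF \<open>compact D\<close>] unfolding bounded_pos by blast
  have "continuous_on UNIV F" using \<open>L \<ge> 0\<close> F_growth by (rule continuous_on_if_lipschitz_growth)
  then have "compact (F ` D)"
    by (rule compact_continuous_image[OF continuous_on_subset \<open>compact D\<close>]) simp
  from compact_imp_bounded[OF this] obtain B where "\<forall>y\<in>F ` D. norm y \<le> B"
    unfolding bounded_iff by blast
  then have B: "\<And>z. z \<in> D \<Longrightarrow> \<bar>F z\<bar> \<le> B" by simp
  have "(L * (1 + 2 * R))-lipschitz_on D F"
  proof (rule lipschitz_onI)
    fix x y assume "x \<in> D" "y \<in> D"
    then have "L * (1 + norm x + norm y) * norm (x - y) \<le> L * (1 + 2 * R) * norm (x - y)"
      using R(2)[OF \<open>x \<in> D\<close>] R(2)[OF \<open>y \<in> D\<close>] \<open>L \<ge> 0\<close>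
      by (intro mult_right_mono mult_left_mono) auto
    then show "dist (F x) (F y) \<le> L * (1 + 2 * R) * dist x y"
      using F_growth[of x y] by (simp add: dist_norm dist_real_def)
  qed (use R \<open>L \<ge> 0\<close> in simp)
  show ?thesis
  proof (rule that)
    show "\<And>z. z \<in> D \<Longrightarrow> norm z \<le> R" by (rule R(2))
    show "R \<ge> 0" "exp (- \<alpha> * B) > 0" "exp (\<alpha> * B) > 0" using R(1) by simp_all
    show "exp (- \<alpha> * B) \<le> cbo_weight \<alpha> F z \<and> cbo_weight \<alpha> F z \<le> exp (\<alpha> * B)" if "z \<in> D" for z
      using cbo_weight_bounds[where F=F and z=z, OF \<open>\<alpha> \<ge> 0\<close> B[OF that]] by simp
    show "(exp (\<alpha> * B) * (\<alpha> * (L * (1 + 2 * R))))-lipschitz_on D (cbo_weight \<alpha> F)"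
      by (rule lipschitz_on_cbo_weight[OF \<open>\<alpha> \<ge> 0\<close> \<open>(L * (1 + 2 * R))-lipschitz_on D F\<close> B])
  qed
qed

lemma cbo_expected_error_le:
  fixes M :: "'a measure" and D :: "(real^'d) set"
  assumes "cbo_setting M D dt \<nu> f0 X0 V0 Tb \<xi>" "compact D" "convex D" "continuous_on UNIV F"
    and "\<And>z. z \<in> D \<Longrightarrow> norm z \<le> R" "wl > 0"
    and "\<And>z. z \<in> D \<Longrightarrow> wl \<le> cbo_weight \<alpha> F z \<and> cbo_weight \<alpha> F z \<le> wu"
    and "Lw-lipschitz_on D (cbo_weight \<alpha> F)"
    and "N \<ge> 1" "lam \<ge> 0" "\<sigma> \<ge> 0" "dt \<ge> 0" "\<nu> \<ge> 0" "real k * dt \<le> Tend"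
  defines "K \<equiv> coupling_rate CARD('d) lam \<sigma> R wl wu Lw"
  shows "let P = particles \<alpha> F D dt lam \<sigma> \<sigma>0 X0 V0 Tb \<xi> N k;
             Q = mf_copies M \<alpha> F D dt lam \<sigma> \<sigma>0 X0 V0 Tb \<xi> k;
             err = (\<lambda>\<omega>. (1 / real N) * (\<Sum>i<N. norm (fst (P \<omega> i) - fst (Q \<omega> i))
                                               + norm (snd (P \<omega> i) - snd (Q \<omega> i))))
         in integrable M err \<and> (\<integral>\<omega>. err \<omega> \<partial>M) \<le> (1 + K) * exp ((1 + K) * Tend) / sqrt (real N)"
proof -
  interpret cbo_coupling M X0 V0 Tb \<xi> D F \<alpha> lam \<sigma> \<sigma>0 dt "exp (- \<nu> * dt)" N R wl wu Lw
    using assms by (intro cbo_coupling_if_setting) auto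
  have "K * (real k * dt) \<le> (1 + K) * Tend"
  proof -
    have "0 \<le> real k * dt" using assms(12) by simp
    then show ?thesis
      using assms(14) rate_nonneg mult_left_mono[of "real k * dt" Tend K] unfolding K_def
      by (simp add: distrib_right)
  qed
  then have "(1 + K) * exp (K * (real k * dt)) / sqrt (real N) \<le> (1 + K) * exp ((1 + K) * Tend) / sqrt (real N)"
    using rate_nonneg unfolding K_def by (intro divide_right_mono mult_left_mono) auto
  with expected_error_bound[of k] show ?thesis
    unfolding Let_def K_def by auto
qed

theorem theorem3p1:
  fixes \<alpha> lam \<sigma> :: real and F :: "real^'d \<Rightarrow> real" and D :: "(real^'d) set"
  assumes "\<alpha> > 0" and "lam > 0" and "\<sigma> > 0"
    and "compact D" and "convex D"
    and A1: "bdd_below (range F)"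
    and A2: "\<exists>xstar. (\<forall>y. F xstar \<le> F y) \<and>
              (\<exists>LF cu cl Rl. LF > 0 \<and> cu > 0 \<and> cl > 0 \<and> Rl > 0 \<and>
                 (\<forall>x y. \<bar>F x - F y\<bar> \<le> LF * (1 + norm x + norm y) * norm (x - y)) \<and>
                 (\<forall>x. F x - F xstar \<le> cu * (1 + (norm x)\<^sup>2)) \<and>
                 (\<forall>x. norm x > Rl \<longrightarrow> F x - F xstar \<ge> cl * (norm x)\<^sup>2))"
  shows "\<exists>C > 0. \<forall>(M :: 'a measure) dt \<nu> \<sigma>0 f0 X0 V0 Tb \<xi> (N :: nat) (Tend :: real) (k :: nat).
           cbo_setting M D dt \<nu> f0 X0 V0 Tb \<xi> \<and>
           0 < dt \<and> dt \<le> 1 \<and> \<nu> > 0 \<and> \<sigma>0 \<ge> 0 \<and> N \<ge> 1 \<and> Tend > 0 \<and> real k * dt \<le> Tend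
           \<longrightarrow>
           (let P = particles \<alpha> F D dt lam \<sigma> \<sigma>0 X0 V0 Tb \<xi> N k;
                Q = mf_copies M \<alpha> F D dt lam \<sigma> \<sigma>0 X0 V0 Tb \<xi> k;
                err = (\<lambda>\<omega>. (1 / real N) * (\<Sum>i<N. norm (fst (P \<omega> i) - fst (Q \<omega> i))
                                                  + norm (snd (P \<omega> i) - snd (Q \<omega> i))))
            in integrable M err \<and>
               (\<integral>\<omega>. err \<omega> \<partial>M) \<le> C * exp (C * Tend) / sqrt (real N))"
proof -
  obtain LF where "LF > 0" and F_growth: "\<And>x y. \<bar>F x - F y\<bar> \<le> LF * (1 + norm x + norm y) * norm (x - y)"
    using A2 by blast
  have "\<alpha> \<ge> 0" "LF \<ge> 0" using \<open>\<alpha> > 0\<close> \<open>LF > 0\<close> by simp_all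
  then obtain R wl wu Lw where constants: "\<And>z. z \<in> D \<Longrightarrow> norm z \<le> R" "R \<ge> 0" "wl > 0" "wu > 0"
      "\<And>z. z \<in> D \<Longrightarrow> wl \<le> cbo_weight \<alpha> F z \<and> cbo_weight \<alpha> F z \<le> wu"
      "Lw-lipschitz_on D (cbo_weight \<alpha> F)"
    by (rule cbo_weight_constants[OF _ \<open>compact D\<close> _ F_growth]) blast
  define K where "K = coupling_rate CARD('d) lam \<sigma> R wl wu Lw"
  have "K \<ge> 0"
    unfolding K_def using \<open>lam > 0\<close> \<open>\<sigma> > 0\<close> constants lipschitz_on_nonneg[OF constants(6)]
    by (intro coupling_rate_nonneg) auto
  have "continuous_on UNIV F"
    using \<open>LF \<ge> 0\<close> F_growth by (rule continuous_on_if_lipschitz_growth)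
  note error_le = cbo_expected_error_le[where lam=lam and \<sigma>=\<sigma>,
      OF _ \<open>compact D\<close> \<open>convex D\<close> this constants(1,3,5,6), folded K_def]
  show ?thesis
    apply (intro exI[of _ "1 + K"] conjI allI impI)
    subgoal using \<open>K \<ge> 0\<close> by simp
    subgoal by (elim conjE, rule error_le, assumption) (use \<open>lam > 0\<close> \<open>\<sigma> > 0\<close> in auto)
    done
qed

end
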